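(* For every countable ordinal $\beta\ge1$ and every finite $m\ge1$, the linear order $\omega^\beta\cdot m$ (ordinal exponentiation and multiplication) satisfies $\mathsf{rk}(\omega^\beta\cdot m)=\omega\cdot\beta+\lfloor\log_2 m\rfloor$.
   Context: An ordinal is regarded as the linear order $(\alpha,\in)$. Let $\mathcal F$ be the class of finite linear orders (language $\{<\}$); countable linear orders are the structures considered; substructures are suborders and $\mathsf{age}(X)$ is the set of finite suborders of $X$. For $A\le B$, $B$ is a prime extension of $A$ if $|B\setminus A|=1$; a realization of $B$ in $X$ (where $A\le X$) is $C\le X$ with $A\le C$ and an order-isomorphism $B\to C$ fixing $A$ pointwise. For $F\in\mathsf{age}(X)$ define by recursion: $\mathsf{rk}_X(F)\ge0$ always; $\mathsf{rk}_X(F)\ge\gamma+1$ iff every prime extension $B\in\mathcal F$ of $F$ has a realization $C$ in $X$ with $\mathsf{rk}_X(C)\ge\gamma$; for limit $\gamma$, $\mathsf{rk}_X(F)\ge\gamma$ iff $\mathsf{rk}_X(F)\ge\delta$ for all $\delta<\gamma$. $\mathsf{rk}_X(F)=\sup\{\gamma:\mathsf{rk}_X(F)\ge\gamma\}$ (or $\infty$ if this holds for all ordinals), and $\mathsf{rk}(X)=\mathsf{rk}_X(\emptyset)$. *)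

theory Defs
  imports Complex_Main "HOL-Library.Countable_Set"
begin

text \<open>Linear orders are given as reflexive linear-order relations (Linear_order, from Main);
  the structure X is the relation r with carrier Field r.
  Finite sets F with F a subset of Field r are the elements of age(X).\<close>

text \<open>A prime extension B of the finite suborder F: a finite linear order whose carrier
  is F plus one new point (canonically represented as Some ` F plus None) and which induces
  on F the order of X.\<close>
definition prime_ext :: "'a rel \<Rightarrow> 'a set \<Rightarrow> 'a option rel \<Rightarrow> bool" where
  "prime_ext r F rB \<longleftrightarrow> Linear_order rB \<and> Field rB = insert None (Some ` F) \<and>
     (\<forall>a\<in>F. \<forall>b\<in>F. (Some a, Some b) \<in> rB \<longleftrightarrow> (a, b) \<in> r)"

definition realization :: "'a rel \<Rightarrow> 'a set \<Rightarrow> 'a option rel \<Rightarrow> 'a set \<Rightarrow> bool" where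
  "realization r F rB C \<longleftrightarrow> F \<subseteq> C \<and> C \<subseteq> Field r \<and>
     (\<exists>h. bij_betw h (Field rB) C \<and> (\<forall>a\<in>F. h (Some a) = a) \<and>
          (\<forall>x\<in>Field rB. \<forall>y\<in>Field rB. (x, y) \<in> rB \<longleftrightarrow> (h x, h y) \<in> r))"

text \<open>rk_ge_at r W w F : rk_X(F) is at least the ordinal (order type) of the strict initial
  segment of the well-order W below w.  Defined by well-founded recursion on W, following the
  three cases of the paper: zero, successor (w has an immediate predecessor v), limit.\<close>
definition rk_ge_at :: "'a rel \<Rightarrow> 'c rel \<Rightarrow> 'c \<Rightarrow> 'a set \<Rightarrow> bool" where
  "rk_ge_at r W = wfrec (W - Id) (\<lambda>rec w F.
     if (\<forall>v. (v, w) \<notin> W - Id) then True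
     else if (\<exists>v. (v, w) \<in> W - Id \<and> (\<forall>u. (u, w) \<in> W - Id \<longrightarrow> (u, v) \<in> W)) then
       (\<exists>v. (v, w) \<in> W - Id \<and> (\<forall>u. (u, w) \<in> W - Id \<longrightarrow> (u, v) \<in> W) \<and>
            (\<forall>rB. prime_ext r F rB \<longrightarrow> (\<exists>C. realization r F rB C \<and> rec v C)))
     else (\<forall>v. (v, w) \<in> W - Id \<longrightarrow> rec v F))"

text \<open>Add a new top element None to a well-order G; the segment below None has the
  order type of G.\<close>
definition top_ext :: "'c rel \<Rightarrow> 'c option rel" where
  "top_ext G = {(Some x, Some y) | x y. (x, y) \<in> G} \<union>
               {(x, None) | x. x = None \<or> (\<exists>y. x = Some y \<and> y \<in> Field G)}"

text \<open>rk_ge r F G : rk_X(F) \<ge> the ordinal of the well-order G.\<close>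
definition rk_ge :: "'a rel \<Rightarrow> 'a set \<Rightarrow> 'c rel \<Rightarrow> bool" where
  "rk_ge r F G = rk_ge_at r (top_ext G) None F"

text \<open>Ordinal exponentiation omega^beta (beta the order type of the well-order Bo), as the
  set of finitely supported functions Field Bo \<rightarrow> nat ordered by comparing at the
  Bo-largest point of difference (the standard definition, as in HOL-Cardinals oexp).\<close>
definition omega_pow :: "'b rel \<Rightarrow> ('b \<Rightarrow> nat) rel" where
  "omega_pow Bo = (let S = {f. finite {x. f x \<noteq> 0} \<and> {x. f x \<noteq> 0} \<subseteq> Field Bo} in
     {(f, g). f \<in> S \<and> g \<in> S \<and>
        (f = g \<or> (\<exists>x. f x < g x \<and> (\<forall>y. (x, y) \<in> Bo \<and> y \<noteq> x \<longrightarrow> f y = g y)))})"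

definition ord_mult_nat :: "'a rel \<Rightarrow> nat \<Rightarrow> (nat \<times> 'a) rel" where
  "ord_mult_nat r m = {((i, x), (j, y)). i < m \<and> j < m \<and> x \<in> Field r \<and> y \<in> Field r \<and>
      (i < j \<or> (i = j \<and> (x, y) \<in> r))}"

text \<open>Ordinal product omega \<cdot> beta: beta copies of omega in succession.\<close>
definition omega_times :: "'b rel \<Rightarrow> ('b \<times> nat) rel" where
  "omega_times Bo = {((b, n), (c, p)). b \<in> Field Bo \<and> c \<in> Field Bo \<and>
      (((b, c) \<in> Bo \<and> b \<noteq> c) \<or> (b = c \<and> n \<le> p))}"

definition ord_plus_nat :: "'a rel \<Rightarrow> nat \<Rightarrow> ('a + nat) rel" where
  "ord_plus_nat r k = {(Inl x, Inl y) | x y. (x, y) \<in> r} \<union>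
     {(Inl x, Inr j) | x j. x \<in> Field r \<and> j < k} \<union> {(Inr i, Inr j) | i j. i \<le> j \<and> j < k}"

end

theory Submission
  imports Defs "HOL-Library.Discrete_Functions"
begin

text \<open>A finite \<open>F\<close> cuts \<open>X = \<omega>^\<beta>\<cdot>m\<close> into finitely many intervals, and \<open>rk\<^sub>X(F)\<close> is the
  least rank of these intervals, where an interval whose ends first differ by \<open>n\<close> units of
  \<open>\<omega>^x\<close> has rank \<open>\<omega>\<cdot>x + \<lfloor>log\<^sub>2 n\<rfloor>\<close>. Indeed, a new point splits one interval into
  two pieces, and one of them has smaller rank because \<open>\<lfloor>log\<^sub>2 a\<rfloor>\<close> or \<open>\<lfloor>log\<^sub>2 b\<rfloor>\<close> is below
  \<open>\<lfloor>log\<^sub>2 (a + b)\<rfloor>\<close>; conversely, for any smaller rank the new point can be placed so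
  that both pieces keep that rank. So the least interval rank satisfies the recursion defining
  \<open>rk\<close>, and by well-founded induction it is \<open>rk\<close>. For \<open>F = {}\<close>, embed \<open>X\<close> in
  \<open>\<omega>^(\<beta>+1)\<close> as the initial segment below \<open>\<omega>^\<beta>\<cdot>m\<close>: the single interval has rank
  \<open>\<omega>\<cdot>\<beta> + \<lfloor>log\<^sub>2 m\<rfloor>\<close>.\<close>

unbundle cardinal_syntax

definition init_seg :: "'c rel \<Rightarrow> 'c \<Rightarrow> 'c rel" where
  "init_seg W w = Restr W (underS W w)"

lemma Well_order_init_seg: "Well_order W \<Longrightarrow> Well_order (init_seg W w)"
  unfolding init_seg_def by (rule Well_order_Restr)

lemma init_seg_ordLeq_mono:
  assumes W: "Well_order W" and ab: "(a, b) \<in> W"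
  shows "init_seg W a \<le>o init_seg W b"
proof -
  have wo: "wo_rel W" using W by (simp add: wo_rel_def)
  have "underS W a \<subseteq> underS W b"
    using W ab by (intro underS_incr) (auto simp: order_on_defs)
  then show ?thesis
    unfolding init_seg_def
    using ofilter_subset_ordLeq[OF W wo_rel.underS_ofilter[OF wo] wo_rel.underS_ofilter[OF wo]] by blast
qed

lemma init_seg_ordLess_mono:
  assumes W: "Well_order W" and ab: "(a, b) \<in> W - Id"
  shows "init_seg W a <o init_seg W b"
proof -
  have wo: "wo_rel W" using W by (simp add: wo_rel_def)
  have "underS W a \<subseteq> underS W b"
    using W ab by (intro underS_incr) (auto simp: order_on_defs)
  moreover have "a \<in> underS W b" "a \<notin> underS W a" using ab by (auto simp: underS_def)
  ultimately have "underS W a < underS W b" by blast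
  then show ?thesis
    unfolding init_seg_def
    using ofilter_subset_ordLess[OF W wo_rel.underS_ofilter[OF wo] wo_rel.underS_ofilter[OF wo]] by blast
qed

lemma ordLess_init_seg_ordIso:
  assumes W: "Well_order W" and Z: "Well_order Z" and lt: "Z <o init_seg W b"
  obtains a where "(a, b) \<in> W - Id" and "Z =o init_seg W a"
proof -
  have wo: "wo_rel W" using W by (simp add: wo_rel_def)
  have filt: "wo_rel.ofilter W (underS W b)" by (rule wo_rel.underS_ofilter[OF wo])
  obtain a where a: "a \<in> underS W b" and iso: "Z =o Restr (init_seg W b) (underS (init_seg W b) a)"
    using ordLess_iff_ordIso_Restr[OF Well_order_init_seg[OF W] Z] lt
      Field_Restr_ofilter[OF W filt] by (auto simp: init_seg_def)
  have "underS W a \<subseteq> underS W b"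
    using filt a unfolding wo_rel.ofilter_def[OF wo] under_def underS_def by auto
  then have "Restr (init_seg W b) (underS (init_seg W b) a) = init_seg W a"
    using a unfolding init_seg_def underS_def by auto
  then show ?thesis using that a iso by (auto simp: underS_def)
qed

lemma init_seg_succ_ordLeq_iff:
  assumes W: "Well_order W" and Z: "Well_order Z"
    and v: "(v, w) \<in> W - Id" and v_max: "\<forall>u. (u, w) \<in> W - Id \<longrightarrow> (u, v) \<in> W"
  shows "init_seg W w \<le>o Z \<longleftrightarrow> init_seg W v <o Z"
proof
  assume "init_seg W w \<le>o Z"
  then show "init_seg W v <o Z"
    using init_seg_ordLess_mono[OF W v] ordLess_ordLeq_trans by blast
next
  assume vZ: "init_seg W v <o Z"
  show "init_seg W w \<le>o Z"
  proof (rule ccontr)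
    assume "\<not> init_seg W w \<le>o Z"
    then have "Z <o init_seg W w"
      using not_ordLeq_iff_ordLess[OF Z Well_order_init_seg[OF W]] by blast
    then obtain u where "(u, w) \<in> W - Id" and "Z =o init_seg W u"
      using ordLess_init_seg_ordIso[OF W Z] by blast
    then have "Z \<le>o init_seg W v"
      using v_max init_seg_ordLeq_mono[OF W] ordIso_ordLeq_trans by blast
    then show False using vZ not_ordLess_ordLeq by blast
  qed
qed

lemma init_seg_limit_ordLeq_iff:
  assumes W: "Well_order W" and Z: "Well_order Z"
    and no_max: "\<not> (\<exists>v. (v, w) \<in> W - Id \<and> (\<forall>u. (u, w) \<in> W - Id \<longrightarrow> (u, v) \<in> W))"
  shows "init_seg W w \<le>o Z \<longleftrightarrow> (\<forall>v. (v, w) \<in> W - Id \<longrightarrow> init_seg W v \<le>o Z)"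
proof
  assume "init_seg W w \<le>o Z"
  then show "\<forall>v. (v, w) \<in> W - Id \<longrightarrow> init_seg W v \<le>o Z"
    using init_seg_ordLeq_mono[OF W] ordLeq_transitive by blast
next
  assume below: "\<forall>v. (v, w) \<in> W - Id \<longrightarrow> init_seg W v \<le>o Z"
  show "init_seg W w \<le>o Z"
  proof (rule ccontr)
    assume "\<not> init_seg W w \<le>o Z"
    then have "Z <o init_seg W w"
      using not_ordLeq_iff_ordLess[OF Z Well_order_init_seg[OF W]] by blast
    then obtain u where u: "(u, w) \<in> W - Id" and Zu: "Z =o init_seg W u"
      using ordLess_init_seg_ordIso[OF W Z] by blast
    obtain u' where u': "(u', w) \<in> W - Id" "(u', u) \<notin> W" using no_max u by blast
    have "u \<in> Field W" "u' \<in> Field W" using u u' by (auto intro: FieldI1)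
    then have "(u, u') \<in> W - Id"
      using W u'(2) unfolding order_on_defs total_on_def refl_on_def by (metis DiffI IdD)
    then have "init_seg W u <o Z"
      using init_seg_ordLess_mono[OF W] below u' ordLess_ordLeq_trans by blast
    then show False using Zu ordIso_ordLess_trans ordLess_irreflexive by blast
  qed
qed

lemma Field_top_ext: "Field (top_ext G) = insert None (Some ` Field G)"
  unfolding top_ext_def Field_def by (auto simp: Domain_def Range_def)

lemma top_ext_iff:
  "(u, v) \<in> top_ext G \<longleftrightarrow>
     (case (u, v) of (Some x, Some y) \<Rightarrow> (x, y) \<in> G
       | (_, None) \<Rightarrow> u \<in> insert None (Some ` Field G) | (None, Some _) \<Rightarrow> False)"
  unfolding top_ext_def by (cases u; cases v) auto

lemma Well_order_top_ext:
  assumes "Well_order G" shows "Well_order (top_ext G)"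
proof -
  have "Linear_order G" and wf: "wf (G - Id)" using assms by (auto simp: order_on_defs)
  then have rf: "refl_on (Field G) G" and tr: "trans G" and an: "antisym G"
    and tot: "total_on (Field G) G" by (auto simp: order_on_defs)
  have "refl_on (Field (top_ext G)) (top_ext G)"
    using rf unfolding Field_top_ext refl_on_def by (auto simp: top_ext_iff)
  moreover have "trans (top_ext G)"
    unfolding trans_def top_ext_iff
    by (auto split: option.splits dest: transD[OF tr] intro: FieldI1 FieldI2)
  moreover have "antisym (top_ext G)"
    unfolding antisym_def top_ext_iff by (auto split: option.splits dest: antisymD[OF an])
  moreover have "total_on (Field (top_ext G)) (top_ext G)"
    using tot unfolding total_on_def Field_top_ext top_ext_iff by auto
  moreover have "top_ext G - Id \<subseteq> inv_image (less_than <*lex*> (G - Id))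
      (\<lambda>z. case z of None \<Rightarrow> (1::nat, undefined) | Some x \<Rightarrow> (0, x))"
    by (auto simp: top_ext_iff split: option.splits)
  then have "wf (top_ext G - Id)"
    by (rule wf_subset[OF wf_inv_image[OF wf_lex_prod[OF wf_less_than wf]]])
  ultimately show ?thesis by (auto simp: order_on_defs intro: FieldI1 FieldI2)
qed

lemma init_seg_top_ext_ordIso:
  assumes "Well_order G" shows "init_seg (top_ext G) None =o G"
proof -
  have "init_seg (top_ext G) None = dir_image G Some"
    unfolding init_seg_def dir_image_def
    by (auto simp: underS_def top_ext_iff split: option.splits intro: FieldI1 FieldI2)
  moreover have "G =o dir_image G Some"
    using dir_image_ordIso[OF assms, of Some] by (simp add: inj_on_def)
  ultimately show ?thesis using ordIso_symmetric by metis
qed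

lemma Field_omega_times:
  assumes "Refl L" shows "Field (omega_times L) = Field L \<times> UNIV"
proof
  show "Field (omega_times L) \<subseteq> Field L \<times> UNIV"
    unfolding omega_times_def Field_def by auto
  have "(p, p) \<in> omega_times L" if "p \<in> Field L \<times> UNIV" for p
    using that assms by (cases p) (auto simp: omega_times_def refl_on_def)
  then show "Field L \<times> UNIV \<subseteq> Field (omega_times L)" by (auto intro: FieldI1)
qed

lemma omega_times_iff:
  "((b, n), (c, p)) \<in> omega_times L \<longleftrightarrow>
    b \<in> Field L \<and> c \<in> Field L \<and> ((b, c) \<in> L \<and> b \<noteq> c \<or> b = c \<and> n \<le> p)"
  by (simp add: omega_times_def)

lemma Well_order_omega_times:
  assumes "Well_order L" shows "Well_order (omega_times L)"
proof -
  have "Linear_order L" and wf: "wf (L - Id)" using assms by (auto simp: order_on_defs)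
  then have rf: "refl_on (Field L) L" and tr: "trans L" and an: "antisym L"
    and tot: "total_on (Field L) L" by (auto simp: order_on_defs)
  have F: "Field (omega_times L) = Field L \<times> UNIV" using rf by (rule Field_omega_times)
  have "refl_on (Field (omega_times L)) (omega_times L)"
    unfolding F unfolding refl_on_def omega_times_def using rf by (auto simp: refl_on_def)
  moreover have "trans (omega_times L)"
    unfolding trans_def omega_times_def by (auto dest: transD[OF tr] antisymD[OF an])
  moreover have "antisym (omega_times L)"
    unfolding antisym_def omega_times_def by (auto dest: antisymD[OF an])
  moreover have "total_on (Field (omega_times L)) (omega_times L)"
    unfolding F unfolding total_on_def omega_times_def using tot by (auto simp: total_on_def)
  moreover have "omega_times L - Id \<subseteq> (L - Id) <*lex*> less_than"
    unfolding omega_times_def by auto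
  then have "wf (omega_times L - Id)" by (rule wf_subset[OF wf_lex_prod[OF wf wf_less_than]])
  ultimately show ?thesis by (auto simp: order_on_defs intro: FieldI1 FieldI2)
qed

lemma finite_Linear_order_has_least:
  assumes r: "Linear_order r" and D: "finite D" "D \<noteq> {}" "D \<subseteq> Field r"
  shows "\<exists>x\<in>D. \<forall>y\<in>D. (x, y) \<in> r"
  using D
proof (induction D rule: finite_ne_induct)
  case (singleton x)
  then show ?case using r by (auto simp: order_on_defs refl_on_def)
next
  case (insert z D)
  then obtain x where x: "x \<in> D" "\<forall>y\<in>D. (x, y) \<in> r" by auto
  have "z \<in> Field r" "x \<in> Field r" using insert x by auto
  then have "(z, x) \<in> r \<or> (x, z) \<in> r"
    using r by (cases "z = x") (auto simp: order_on_defs total_on_def refl_on_def)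
  then show ?case
    using x r \<open>z \<in> Field r\<close> by (auto simp: order_on_defs refl_on_def dest: transD)
qed

lemma finite_Linear_order_has_greatest:
  assumes "Linear_order r" and "finite D" "D \<noteq> {}" "D \<subseteq> Field r"
  shows "\<exists>x\<in>D. \<forall>y\<in>D. (y, x) \<in> r"
  using finite_Linear_order_has_least[of "r\<inverse>" D] assms by simp

lemma Well_order_has_least:
  assumes "Well_order r" and "Field r \<noteq> {}"
  shows "\<exists>x\<in>Field r. \<forall>y\<in>Field r. (x, y) \<in> r"
  using assms Linear_order_wf_diff_Id[of r] unfolding well_order_on_def by blast

section \<open>Prime extensions as cuts\<close>

definition is_cut :: "'a rel \<Rightarrow> 'a set \<Rightarrow> ('a \<Rightarrow> bool) \<Rightarrow> bool" where
  "is_cut r F P \<longleftrightarrow> (\<forall>x\<in>F. \<forall>y\<in>F. (x, y) \<in> r \<and> P y \<longrightarrow> P x)"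

definition in_gap :: "'a rel \<Rightarrow> 'a set \<Rightarrow> ('a \<Rightarrow> bool) \<Rightarrow> 'a \<Rightarrow> bool" where
  "in_gap r F P c \<longleftrightarrow> (\<forall>x\<in>F. (x, c) \<in> r \<longleftrightarrow> P x)"

lemma prime_ext_is_cut:
  assumes "prime_ext r F B"
  shows "is_cut r F (\<lambda>x. (Some x, None) \<in> B)"
proof -
  have "trans B" using assms by (auto simp: prime_ext_def order_on_defs)
  then show ?thesis using assms unfolding is_cut_def prime_ext_def by (meson transD)
qed

lemma realization_in_gap:
  assumes "prime_ext r F B" and "realization r F B C"
  obtains c where "c \<in> Field r - F" and "C = insert c F"
    and "in_gap r F (\<lambda>x. (Some x, None) \<in> B) c"
proof -
  have FB: "Field B = insert None (Some ` F)" using assms(1) by (simp add: prime_ext_def)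
  obtain h where bij: "bij_betw h (Field B) C" and fix_F: "\<forall>a\<in>F. h (Some a) = a"
    and ord: "\<forall>x\<in>Field B. \<forall>y\<in>Field B. (x, y) \<in> B \<longleftrightarrow> (h x, h y) \<in> r"
    and "C \<subseteq> Field r"
    using assms(2) unfolding realization_def by blast
  have C: "C = insert (h None) F"
    using bij fix_F unfolding bij_betw_def FB by force
  have "h None \<notin> F"
  proof
    assume "h None \<in> F"
    then have "h (Some (h None)) = h None" using fix_F by simp
    then show False using bij \<open>h None \<in> F\<close> unfolding bij_betw_def inj_on_def FB by blast
  qed
  moreover have "in_gap r F (\<lambda>x. (Some x, None) \<in> B) (h None)"
    unfolding in_gap_def using ord fix_F FB by auto
  ultimately show ?thesis using that C \<open>C \<subseteq> Field r\<close> by blast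
qed

lemma in_gap_realization:
  assumes r: "Linear_order r" and F: "F \<subseteq> Field r" and B: "prime_ext r F B"
    and c: "c \<in> Field r - F" and gap: "in_gap r F (\<lambda>x. (Some x, None) \<in> B) c"
  shows "realization r F B (insert c F)"
proof -
  have FB: "Field B = insert None (Some ` F)" and BL: "Linear_order B"
    and B_F: "\<forall>a\<in>F. \<forall>b\<in>F. (Some a, Some b) \<in> B \<longleftrightarrow> (a, b) \<in> r"
    using B by (auto simp: prime_ext_def)
  define h where "h = case_option c id"
  have "(None, Some b) \<in> B \<longleftrightarrow> (c, b) \<in> r" if "b \<in> F" for b
  proof -
    have "b \<noteq> c" using that c by auto
    then have "(c, b) \<in> r \<longleftrightarrow> (b, c) \<notin> r"
      using Linear_order_in_diff_Id[OF r] c that F by blast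
    moreover have "(None, Some b) \<in> B \<longleftrightarrow> (Some b, None) \<notin> B"
      using Linear_order_in_diff_Id[OF BL] that FB by auto
    ultimately show ?thesis using gap that unfolding in_gap_def by blast
  qed
  then have "\<forall>x\<in>Field B. \<forall>y\<in>Field B. (x, y) \<in> B \<longleftrightarrow> (h x, h y) \<in> r"
    using gap B_F BL r c unfolding FB h_def in_gap_def by (auto simp: order_on_defs refl_on_def)
  moreover have "bij_betw h (Field B) (insert c F)"
    unfolding bij_betw_def inj_on_def FB h_def using c by (auto simp: image_image)
  ultimately show ?thesis
    unfolding realization_def using c F by (auto simp: h_def)
qed

lemma prime_ext_of_cut:
  assumes r: "Linear_order r" and F: "F \<subseteq> Field r" and P: "is_cut r F P"
  obtains B where "prime_ext r F B" and "\<forall>x\<in>F. (Some x, None) \<in> B \<longleftrightarrow> P x"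
proof -
  define B where "B = {(Some x, Some y) | x y. x \<in> F \<and> y \<in> F \<and> (x, y) \<in> r} \<union>
    {(Some x, None) | x. x \<in> F \<and> P x} \<union> {(None, Some y) | y. y \<in> F \<and> \<not> P y} \<union> {(None, None)}"
  have refl_r: "\<And>x. x \<in> F \<Longrightarrow> (x, x) \<in> r"
    using r F by (auto simp: order_on_defs refl_on_def)
  have total_r: "\<And>x y. x \<in> F \<Longrightarrow> y \<in> F \<Longrightarrow> (x, y) \<in> r \<or> (y, x) \<in> r"
    using r F refl_r by (metis order_on_defs(3) subsetD total_on_def)
  have trans_r: "trans r" and antisym_r: "antisym r" using r by (auto simp: order_on_defs)
  have cut: "\<And>x y. x \<in> F \<Longrightarrow> y \<in> F \<Longrightarrow> (x, y) \<in> r \<Longrightarrow> P y \<Longrightarrow> P x"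
    using P by (auto simp: is_cut_def)
  have cut_below: "\<And>x y. x \<in> F \<Longrightarrow> y \<in> F \<Longrightarrow> P x \<Longrightarrow> \<not> P y \<Longrightarrow> (x, y) \<in> r"
    using total_r cut by blast
  have FB: "Field B = insert None (Some ` F)"
  proof
    show "Field B \<subseteq> insert None (Some ` F)" unfolding B_def Field_def by auto
    have "(u, u) \<in> B" if "u \<in> insert None (Some ` F)" for u using that refl_r by (auto simp: B_def)
    then show "insert None (Some ` F) \<subseteq> Field B" by (meson FieldI1 subsetI)
  qed
  have "refl_on (Field B) B" unfolding FB unfolding B_def refl_on_def using refl_r by auto
  moreover have "trans B"
  proof (rule transI)
    fix u v w assume "(u, v) \<in> B" "(v, w) \<in> B"
    then show "(u, w) \<in> B"
      unfolding B_def using cut cut_below transD[OF trans_r] by (cases u; cases v; cases w) blast+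
  qed
  moreover have "antisym B"
    unfolding B_def antisym_def by (auto dest: antisymD[OF antisym_r])
  moreover have "total_on (Field B) B"
    unfolding FB unfolding B_def total_on_def using total_r by auto
  ultimately have "Linear_order B" by (auto simp: order_on_defs intro: FieldI1 FieldI2)
  moreover have "\<forall>a\<in>F. \<forall>b\<in>F. (Some a, Some b) \<in> B \<longleftrightarrow> (a, b) \<in> r" by (auto simp: B_def)
  ultimately have "prime_ext r F B" using FB unfolding prime_ext_def by blast
  moreover have "\<forall>x\<in>F. (Some x, None) \<in> B \<longleftrightarrow> P x" by (auto simp: B_def)
  ultimately show ?thesis by (rule that)
qed

section \<open>Computing the rank from a rank function\<close>

lemma rk_ge_at_unfold:
  assumes "wf (W - Id)"
  shows "rk_ge_at r W w F =
    (if (\<forall>v. (v, w) \<notin> W - Id) then True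
     else if (\<exists>v. (v, w) \<in> W - Id \<and> (\<forall>u. (u, w) \<in> W - Id \<longrightarrow> (u, v) \<in> W)) then
       (\<exists>v. (v, w) \<in> W - Id \<and> (\<forall>u. (u, w) \<in> W - Id \<longrightarrow> (u, v) \<in> W) \<and>
            (\<forall>rB. prime_ext r F rB \<longrightarrow> (\<exists>C. realization r F rB C \<and> rk_ge_at r W v C)))
     else (\<forall>v. (v, w) \<in> W - Id \<longrightarrow> rk_ge_at r W v F))"
  unfolding rk_ge_at_def
  apply (subst wfrec_fixpoint[OF assms])
  subgoal unfolding adm_wf_def
    apply (intro allI impI ext)
    apply (rule if_cong[OF refl refl])
    apply (rule if_cong[OF refl])
     apply (metis (no_types, lifting))
    apply (metis (no_types, lifting))
    done
  apply simp
  done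

lemma rk_ge_at_succ:
  assumes W: "Well_order W" and v: "(v, w) \<in> W - Id"
    and v_max: "\<forall>u. (u, w) \<in> W - Id \<longrightarrow> (u, v) \<in> W"
  shows "rk_ge_at r W w F \<longleftrightarrow>
    (\<forall>rB. prime_ext r F rB \<longrightarrow> (\<exists>C. realization r F rB C \<and> rk_ge_at r W v C))"
proof -
  have wf: "wf (W - Id)" and "antisym W" using W by (auto simp: order_on_defs)
  have "\<not> (\<forall>v. (v, w) \<notin> W - Id)"
    and "\<exists>v. (v, w) \<in> W - Id \<and> (\<forall>u. (u, w) \<in> W - Id \<longrightarrow> (u, v) \<in> W)"
    using v v_max by blast+
  then have "rk_ge_at r W w F \<longleftrightarrow>
    (\<exists>v. (v, w) \<in> W - Id \<and> (\<forall>u. (u, w) \<in> W - Id \<longrightarrow> (u, v) \<in> W) \<and>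
       (\<forall>rB. prime_ext r F rB \<longrightarrow> (\<exists>C. realization r F rB C \<and> rk_ge_at r W v C)))"
    by (simp only: rk_ge_at_unfold[OF wf, of r w F] if_False if_True)
  moreover have "v' = v" if "(v', w) \<in> W - Id" "\<forall>u. (u, w) \<in> W - Id \<longrightarrow> (u, v') \<in> W" for v'
    using that v v_max \<open>antisym W\<close> by (meson antisymD)
  ultimately show ?thesis using v v_max by blast
qed

lemma rk_ge_at_limit:
  assumes W: "Well_order W"
    and no_max: "\<not> (\<exists>v. (v, w) \<in> W - Id \<and> (\<forall>u. (u, w) \<in> W - Id \<longrightarrow> (u, v) \<in> W))"
  shows "rk_ge_at r W w F \<longleftrightarrow> (\<forall>v. (v, w) \<in> W - Id \<longrightarrow> rk_ge_at r W v F)"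
proof -
  have wf: "wf (W - Id)" using W by (simp add: order_on_defs)
  show ?thesis
  proof (cases "\<forall>v. (v, w) \<notin> W - Id")
    case True
    then show ?thesis unfolding rk_ge_at_unfold[OF wf, of r w F] if_P[OF True] by blast
  next
    case False
    show ?thesis unfolding rk_ge_at_unfold[OF wf, of r w F] if_not_P[OF False] if_not_P[OF no_max]
      by (rule refl)
  qed
qed

locale rank_function =
  fixes r :: "'a rel" and Ref :: "'q rel" and R :: "'a set \<Rightarrow> 'q"
  assumes lin: "Linear_order r" and wo: "Well_order Ref"
    and extend: "\<And>F P q. finite F \<Longrightarrow> F \<subseteq> Field r \<Longrightarrow> is_cut r F P \<Longrightarrow> (q, R F) \<in> Ref - Id \<Longrightarrow>
      \<exists>c \<in> Field r - F. in_gap r F P c \<and> (q, R (insert c F)) \<in> Ref"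
    and drop: "\<And>F. finite F \<Longrightarrow> F \<subseteq> Field r \<Longrightarrow> \<exists>P. is_cut r F P \<and>
      (\<forall>c \<in> Field r - F. in_gap r F P c \<longrightarrow> (R (insert c F), R F) \<in> Ref - Id)"
begin

lemma all_prime_ext_realized_iff_ordLess:
  assumes Z: "Well_order Z" and F: "finite F" "F \<subseteq> Field r"
    and Q: "\<And>C. finite C \<Longrightarrow> C \<subseteq> Field r \<Longrightarrow> Q C \<longleftrightarrow> Z \<le>o init_seg Ref (R C)"
  shows "(\<forall>rB. prime_ext r F rB \<longrightarrow> (\<exists>C. realization r F rB C \<and> Q C)) \<longleftrightarrow>
    Z <o init_seg Ref (R F)"
proof
  assume realized: "\<forall>rB. prime_ext r F rB \<longrightarrow> (\<exists>C. realization r F rB C \<and> Q C)"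
  obtain P where P: "is_cut r F P"
    and P_drop: "\<forall>c \<in> Field r - F. in_gap r F P c \<longrightarrow> (R (insert c F), R F) \<in> Ref - Id"
    using drop[OF F] by blast
  obtain B where B: "prime_ext r F B" and B_P: "\<forall>x\<in>F. (Some x, None) \<in> B \<longleftrightarrow> P x"
    using prime_ext_of_cut[OF lin F(2) P] by blast
  obtain C where "realization r F B C" and "Q C" using realized B by blast
  then obtain c where c: "c \<in> Field r - F" "C = insert c F"
    and "in_gap r F (\<lambda>x. (Some x, None) \<in> B) c"
    using realization_in_gap[OF B] by blast
  then have "in_gap r F P c" using B_P by (simp add: in_gap_def)
  then have "init_seg Ref (R C) <o init_seg Ref (R F)"
    using P_drop c init_seg_ordLess_mono[OF wo] by blast
  moreover have "Z \<le>o init_seg Ref (R C)" using Q[of C] \<open>Q C\<close> c F by blast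
  ultimately show "Z <o init_seg Ref (R F)" using ordLeq_ordLess_trans by blast
next
  assume "Z <o init_seg Ref (R F)"
  then obtain q where q: "(q, R F) \<in> Ref - Id" and Zq: "Z =o init_seg Ref q"
    using ordLess_init_seg_ordIso[OF wo Z] by blast
  show "\<forall>rB. prime_ext r F rB \<longrightarrow> (\<exists>C. realization r F rB C \<and> Q C)"
  proof (intro allI impI)
    fix rB assume rB: "prime_ext r F rB"
    obtain c where c: "c \<in> Field r - F" and gap: "in_gap r F (\<lambda>x. (Some x, None) \<in> rB) c"
      and qc: "(q, R (insert c F)) \<in> Ref"
      using extend[OF F prime_ext_is_cut[OF rB] q] by blast
    have "Z \<le>o init_seg Ref (R (insert c F))"
      using Zq init_seg_ordLeq_mono[OF wo qc] ordIso_ordLeq_trans by blast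
    then have "Q (insert c F)" using Q[of "insert c F"] F c by blast
    moreover have "realization r F rB (insert c F)"
      using in_gap_realization[OF lin F(2) rB c gap] .
    ultimately show "\<exists>C. realization r F rB C \<and> Q C" by blast
  qed
qed

theorem rk_ge_at_iff:
  assumes W: "Well_order W"
  shows "finite F \<Longrightarrow> F \<subseteq> Field r \<Longrightarrow> rk_ge_at r W w F \<longleftrightarrow> init_seg W w \<le>o init_seg Ref (R F)"
proof (induction w arbitrary: F rule: wf_induct[of "W - Id"])
  show "wf (W - Id)" using W by (simp add: order_on_defs)
next
  case (2 w F)
  have IH: "rk_ge_at r W v C \<longleftrightarrow> init_seg W v \<le>o init_seg Ref (R C)"
    if "(v, w) \<in> W - Id" "finite C" "C \<subseteq> Field r" for v C
    using 2 that by blast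
  have Z: "Well_order (init_seg Ref (R F))" using wo by (rule Well_order_init_seg)
  show ?case
  proof (cases "\<exists>v. (v, w) \<in> W - Id \<and> (\<forall>u. (u, w) \<in> W - Id \<longrightarrow> (u, v) \<in> W)")
    case True
    then obtain v where v: "(v, w) \<in> W - Id" and v_max: "\<forall>u. (u, w) \<in> W - Id \<longrightarrow> (u, v) \<in> W"
      by blast
    have "rk_ge_at r W w F \<longleftrightarrow>
        (\<forall>rB. prime_ext r F rB \<longrightarrow> (\<exists>C. realization r F rB C \<and> rk_ge_at r W v C))"
      by (rule rk_ge_at_succ[OF W v v_max])
    also have "\<dots> \<longleftrightarrow> init_seg W v <o init_seg Ref (R F)"
      by (rule all_prime_ext_realized_iff_ordLess[OF Well_order_init_seg[OF W] 2(2,3) IH[OF v]])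
    also have "\<dots> \<longleftrightarrow> init_seg W w \<le>o init_seg Ref (R F)"
      using init_seg_succ_ordLeq_iff[OF W Z v v_max] by blast
    finally show ?thesis .
  next
    case False
    have "rk_ge_at r W w F \<longleftrightarrow> (\<forall>v. (v, w) \<in> W - Id \<longrightarrow> rk_ge_at r W v F)"
      by (rule rk_ge_at_limit[OF W False])
    also have "\<dots> \<longleftrightarrow> (\<forall>v. (v, w) \<in> W - Id \<longrightarrow> init_seg W v \<le>o init_seg Ref (R F))"
      using IH 2 by blast
    also have "\<dots> \<longleftrightarrow> init_seg W w \<le>o init_seg Ref (R F)"
      using init_seg_limit_ordLeq_iff[OF W Z False] by blast
    finally show ?thesis .
  qed
qed

corollary rk_ge_iff:
  assumes G: "Well_order G" and F: "finite F" "F \<subseteq> Field r"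
  shows "rk_ge r F G \<longleftrightarrow> G \<le>o init_seg Ref (R F)"
proof -
  have "rk_ge r F G \<longleftrightarrow> init_seg (top_ext G) None \<le>o init_seg Ref (R F)"
    unfolding rk_ge_def by (rule rk_ge_at_iff[OF Well_order_top_ext[OF G] F])
  moreover have "init_seg (top_ext G) None =o G" by (rule init_seg_top_ext_ordIso[OF G])
  ultimately show ?thesis by (meson ordIso_ordLeq_trans ordIso_symmetric)
qed

end

definition fin_supp :: "'t rel \<Rightarrow> ('t \<Rightarrow> nat) set" where
  "fin_supp L = {f. finite {x. f x \<noteq> 0} \<and> {x. f x \<noteq> 0} \<subseteq> Field L}"

definition lex_less :: "'t rel \<Rightarrow> ('t \<Rightarrow> nat) \<Rightarrow> ('t \<Rightarrow> nat) \<Rightarrow> bool" where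
  "lex_less L f g \<longleftrightarrow> (\<exists>x. f x < g x \<and> (\<forall>y. (x, y) \<in> L \<and> y \<noteq> x \<longrightarrow> f y = g y))"

definition top_diff :: "'t rel \<Rightarrow> ('t \<Rightarrow> nat) \<Rightarrow> ('t \<Rightarrow> nat) \<Rightarrow> 't" where
  "top_diff L f g = (SOME x. x \<in> Field L \<and> f x \<noteq> g x \<and> (\<forall>y. f y \<noteq> g y \<longrightarrow> (y, x) \<in> L))"

definition trunc_upd :: "'t rel \<Rightarrow> ('t \<Rightarrow> nat) \<Rightarrow> 't \<Rightarrow> nat \<Rightarrow> 't \<Rightarrow> nat" where
  "trunc_upd L f x v = (\<lambda>z. if (x, z) \<in> L \<and> z \<noteq> x then f z else if z = x then v else 0)"

lemma omega_pow_iff: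
  "(f, g) \<in> omega_pow L \<longleftrightarrow> f \<in> fin_supp L \<and> g \<in> fin_supp L \<and> (f = g \<or> lex_less L f g)"
  unfolding omega_pow_def fin_supp_def lex_less_def Let_def by simp

lemma refl_omega_pow: "Refl (omega_pow L)"
  unfolding refl_on_def Field_def by (auto simp: omega_pow_iff)

lemma Field_omega_pow: "Field (omega_pow L) = fin_supp L"
  unfolding Field_def by (auto simp: omega_pow_iff)

lemma zero_in_fin_supp: "(\<lambda>_. 0) \<in> fin_supp L"
  by (simp add: fin_supp_def)

lemma fin_supp_nonzero_in_Field: "f \<in> fin_supp L \<Longrightarrow> f x \<noteq> 0 \<Longrightarrow> x \<in> Field L"
  by (auto simp: fin_supp_def)

lemma lex_less_irrefl: "\<not> lex_less L f f"
  unfolding lex_less_def by auto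

lemma not_lex_less_zero: "\<not> lex_less L f (\<lambda>_. 0)"
  unfolding lex_less_def by auto

locale lex_exponent =
  fixes L :: "'t rel"
  assumes linear: "Linear_order L"
begin

lemma L_trans: "(x, y) \<in> L \<Longrightarrow> (y, z) \<in> L \<Longrightarrow> (x, z) \<in> L"
  using linear by (auto simp: order_on_defs dest: transD)

lemma L_antisym: "(x, y) \<in> L \<Longrightarrow> (y, x) \<in> L \<Longrightarrow> x = y"
  using linear by (auto simp: order_on_defs dest: antisymD)

lemma L_total: "x \<in> Field L \<Longrightarrow> y \<in> Field L \<Longrightarrow> (x, y) \<in> L \<or> (y, x) \<in> L"
  using linear by (cases "x = y") (auto simp: order_on_defs total_on_def refl_on_def)

lemma L_refl: "x \<in> Field L \<Longrightarrow> (x, x) \<in> L"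
  using linear by (auto simp: order_on_defs refl_on_def)

lemma top_diff:
  assumes f: "f \<in> fin_supp L" and g: "g \<in> fin_supp L" and "f \<noteq> g"
  shows "top_diff L f g \<in> Field L" and "f (top_diff L f g) \<noteq> g (top_diff L f g)"
    and "\<And>y. f y \<noteq> g y \<Longrightarrow> (y, top_diff L f g) \<in> L"
proof -
  let ?D = "{x. f x \<noteq> g x}"
  have "?D \<subseteq> {x. f x \<noteq> 0} \<union> {x. g x \<noteq> 0}" by auto
  then have "finite ?D" and "?D \<subseteq> Field L" using f g by (auto simp: fin_supp_def intro: finite_subset)
  moreover have "?D \<noteq> {}" using \<open>f \<noteq> g\<close> by auto
  ultimately obtain x where "x \<in> ?D" "\<forall>y\<in>?D. (y, x) \<in> L"
    using finite_Linear_order_has_greatest[OF linear] by meson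
  then have "\<exists>x. x \<in> Field L \<and> f x \<noteq> g x \<and> (\<forall>y. f y \<noteq> g y \<longrightarrow> (y, x) \<in> L)"
    using \<open>?D \<subseteq> Field L\<close> by blast
  then have "top_diff L f g \<in> Field L \<and> f (top_diff L f g) \<noteq> g (top_diff L f g) \<and>
      (\<forall>y. f y \<noteq> g y \<longrightarrow> (y, top_diff L f g) \<in> L)"
    unfolding top_diff_def by (rule someI_ex)
  then show "top_diff L f g \<in> Field L" and "f (top_diff L f g) \<noteq> g (top_diff L f g)"
    and "\<And>y. f y \<noteq> g y \<Longrightarrow> (y, top_diff L f g) \<in> L" by blast+
qed

lemma top_diff_commute: "top_diff L f g = top_diff L g f"
  unfolding top_diff_def by metis

lemma agree_above_top_diff:
  assumes "f \<in> fin_supp L" "g \<in> fin_supp L" "f \<noteq> g"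
    and "(top_diff L f g, y) \<in> L" "y \<noteq> top_diff L f g"
  shows "f y = g y"
  using top_diff[OF assms(1-3)] assms(4,5) L_antisym by metis

lemma top_diff_eqI:
  assumes "f \<in> fin_supp L" "g \<in> fin_supp L" "f x \<noteq> g x"
    and "\<forall>y. (x, y) \<in> L \<and> y \<noteq> x \<longrightarrow> f y = g y"
  shows "top_diff L f g = x"
proof -
  have "f \<noteq> g" using assms(3) by auto
  then show ?thesis using top_diff[OF assms(1,2)] assms(3,4) by metis
qed

lemma lex_less_iff_top_diff:
  assumes f: "f \<in> fin_supp L" and g: "g \<in> fin_supp L"
  shows "lex_less L f g \<longleftrightarrow> f \<noteq> g \<and> f (top_diff L f g) < g (top_diff L f g)"
proof
  assume "lex_less L f g"
  then obtain x where x: "f x < g x" "\<forall>y. (x, y) \<in> L \<and> y \<noteq> x \<longrightarrow> f y = g y"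
    unfolding lex_less_def by blast
  then show "f \<noteq> g \<and> f (top_diff L f g) < g (top_diff L f g)"
    using top_diff_eqI[OF f g, of x] by auto
qed (auto simp: lex_less_def intro: agree_above_top_diff[OF f g])

lemma lex_less_top_diff:
  assumes f: "f \<in> fin_supp L" and g: "g \<in> fin_supp L" and fg: "lex_less L f g"
  shows "top_diff L f g \<in> Field L" and "f (top_diff L f g) < g (top_diff L f g)"
    and "\<forall>y. (top_diff L f g, y) \<in> L \<and> y \<noteq> top_diff L f g \<longrightarrow> f y = g y"
proof -
  have "f \<noteq> g" using fg lex_less_irrefl by auto
  then show "top_diff L f g \<in> Field L" and "f (top_diff L f g) < g (top_diff L f g)"
    and "\<forall>y. (top_diff L f g, y) \<in> L \<and> y \<noteq> top_diff L f g \<longrightarrow> f y = g y"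
    using top_diff(1)[OF f g] lex_less_iff_top_diff[OF f g] agree_above_top_diff[OF f g] fg by auto
qed

lemma lex_less_asym:
  assumes "f \<in> fin_supp L" "g \<in> fin_supp L" "lex_less L f g"
  shows "\<not> lex_less L g f"
  using assms lex_less_iff_top_diff top_diff_commute[of f g] by auto

lemma lex_less_trans:
  assumes f: "f \<in> fin_supp L" and g: "g \<in> fin_supp L" and h: "h \<in> fin_supp L"
    and "lex_less L f g" "lex_less L g h"
  shows "lex_less L f h"
proof -
  obtain x where x: "f x < g x" "\<forall>y. (x, y) \<in> L \<and> y \<noteq> x \<longrightarrow> f y = g y"
    using \<open>lex_less L f g\<close> unfolding lex_less_def by blast
  obtain z where z: "g z < h z" "\<forall>y. (z, y) \<in> L \<and> y \<noteq> z \<longrightarrow> g y = h y"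
    using \<open>lex_less L g h\<close> unfolding lex_less_def by blast
  have "x \<in> Field L" "z \<in> Field L"
    using x(1) z(1) fin_supp_nonzero_in_Field[OF g, of x] fin_supp_nonzero_in_Field[OF h, of z] by auto
  then consider "x = z" | "(x, z) \<in> L" "x \<noteq> z" | "(z, x) \<in> L" "x \<noteq> z" using L_total by blast
  then show ?thesis
  proof cases
    case 1
    then show ?thesis using x z unfolding lex_less_def by (metis order.strict_trans)
  next
    case 2
    then have "f z < h z" "\<forall>y. (z, y) \<in> L \<and> y \<noteq> z \<longrightarrow> f y = h y"
      using x z L_trans L_antisym by (metis, metis)
    then show ?thesis unfolding lex_less_def by blast
  next
    case 3
    then have "f x < h x" "\<forall>y. (x, y) \<in> L \<and> y \<noteq> x \<longrightarrow> f y = h y"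
      using x z L_trans L_antisym by (metis, metis)
    then show ?thesis unfolding lex_less_def by blast
  qed
qed

lemma lex_less_total:
  assumes "f \<in> fin_supp L" "g \<in> fin_supp L"
  shows "f = g \<or> lex_less L f g \<or> lex_less L g f"
  using assms lex_less_iff_top_diff top_diff_commute[of f g] top_diff(2)[OF assms] by (metis nat_neq_iff)

lemma Linear_order_omega_pow: "Linear_order (omega_pow L)"
proof -
  have "refl_on (Field (omega_pow L)) (omega_pow L)"
    unfolding refl_on_def Field_omega_pow by (auto simp: omega_pow_iff)
  moreover have "trans (omega_pow L)"
    unfolding trans_def omega_pow_iff using lex_less_trans by blast
  moreover have "antisym (omega_pow L)"
    unfolding antisym_def omega_pow_iff using lex_less_asym by blast
  moreover have "total_on (Field (omega_pow L)) (omega_pow L)"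
    unfolding total_on_def Field_omega_pow omega_pow_iff using lex_less_total by blast
  ultimately show ?thesis by (auto simp: order_on_defs intro: FieldI1 FieldI2)
qed

lemma zero_lex_less: "f \<in> fin_supp L \<Longrightarrow> f \<noteq> (\<lambda>_. 0) \<Longrightarrow> lex_less L (\<lambda>_. 0) f"
  using lex_less_iff_top_diff[OF zero_in_fin_supp] top_diff(2)[OF zero_in_fin_supp] by auto

lemma lex_between_agree_above:
  assumes f: "f \<in> fin_supp L" and c: "c \<in> fin_supp L" and b: "b \<in> fin_supp L"
    and fc: "f = c \<or> lex_less L f c" and cb: "c = b \<or> lex_less L c b"
    and above: "\<forall>y. (x, y) \<in> L \<and> y \<noteq> x \<longrightarrow> f y = b y"
  shows "\<forall>y. (x, y) \<in> L \<and> y \<noteq> x \<longrightarrow> c y = b y" and "f x \<le> c x" and "c x \<le> b x"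
proof -
  show cb_above: "\<forall>y. (x, y) \<in> L \<and> y \<noteq> x \<longrightarrow> c y = b y"
  proof (intro allI impI)
    fix y assume y: "(x, y) \<in> L \<and> y \<noteq> x"
    show "c y = b y"
    proof (rule ccontr)
      assume "c y \<noteq> b y"
      then have "c \<noteq> b" by auto
      define z where "z = top_diff L c b"
      have "(y, z) \<in> L" using top_diff(3)[OF c b \<open>c \<noteq> b\<close>] \<open>c y \<noteq> b y\<close> z_def by blast
      then have xz: "(x, z) \<in> L" "z \<noteq> x" using y L_trans L_antisym by blast+
      have "c z < b z" using cb \<open>c \<noteq> b\<close> lex_less_iff_top_diff[OF c b] z_def by simp
      moreover have "c u = f u" if "(z, u) \<in> L" "u \<noteq> z" for u
        using agree_above_top_diff[OF c b \<open>c \<noteq> b\<close>] that above xz L_trans L_antisym z_def by metis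
      ultimately have "lex_less L c f" unfolding lex_less_def using above xz by metis
      then show False using fc lex_less_asym[OF f c] lex_less_irrefl by metis
    qed
  qed
  show "c x \<le> b x"
  proof (rule ccontr)
    assume "\<not> c x \<le> b x"
    then have "lex_less L b c" unfolding lex_less_def using cb_above by (metis not_le)
    then show False using cb lex_less_asym[OF b c] lex_less_irrefl by metis
  qed
  show "f x \<le> c x"
  proof (rule ccontr)
    assume "\<not> f x \<le> c x"
    then have "lex_less L c f" unfolding lex_less_def using cb_above above by (metis not_le)
    then show False using fc lex_less_asym[OF f c] lex_less_irrefl by metis
  qed
qed

lemma trunc_upd_in_fin_supp:
  assumes "f \<in> fin_supp L" "x \<in> Field L"
  shows "trunc_upd L f x v \<in> fin_supp L"
proof -
  have "{z. trunc_upd L f x v z \<noteq> 0} \<subseteq> insert x {z. f z \<noteq> 0}"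
    by (auto simp: trunc_upd_def)
  then show ?thesis using assms unfolding fin_supp_def by (auto intro: finite_subset)
qed

lemma trunc_upd_lex_less: "v < f x \<Longrightarrow> lex_less L (trunc_upd L f x v) f"
  unfolding lex_less_def by (intro exI[of _ x]) (simp add: trunc_upd_def)

lemma lex_less_trunc_upd: "f x < v \<Longrightarrow> lex_less L f (trunc_upd L f x v)"
  unfolding lex_less_def by (intro exI[of _ x]) (simp add: trunc_upd_def)

lemma trunc_upd_at: "trunc_upd L f x v x = v"
  by (simp add: trunc_upd_def)

lemma trunc_upd_above: "(x, z) \<in> L \<Longrightarrow> z \<noteq> x \<Longrightarrow> trunc_upd L f x v z = f z"
  by (simp add: trunc_upd_def)

end

section \<open>Ranks of intervals of \<open>\<omega>^L\<close>\<close>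

lemma le_floor_log_iff: "0 < n \<Longrightarrow> i \<le> floor_log n \<longleftrightarrow> 2 ^ i \<le> n"
proof
  assume "0 < n" "i \<le> floor_log n"
  then have "(2::nat) ^ i \<le> 2 ^ floor_log n" by (simp add: power_increasing)
  then show "2 ^ i \<le> n" using floor_log_exp2_le[of n] \<open>0 < n\<close> by linarith
next
  assume "2 ^ i \<le> n"
  then show "i \<le> floor_log n" using floor_log_le_iff[of "2 ^ i" n] by simp
qed

lemma floor_log_lt_floor_log_add:
  assumes "0 < a" "0 < b"
  shows "floor_log a < floor_log (a + b) \<or> floor_log b < floor_log (a + b)"
proof (rule ccontr)
  let ?k = "floor_log (a + b)"
  assume "\<not> ?thesis"
  then have "?k \<le> floor_log a" "?k \<le> floor_log b" by auto
  then have "2 ^ ?k \<le> a" "2 ^ ?k \<le> b" using le_floor_log_iff assms by blast+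
  then show False using floor_log_exp2_gt[of "a + b"] by simp
qed

locale interval_ranks = lex_exponent +
  fixes x0 :: 't and T :: "'t \<Rightarrow> nat"
  assumes wf: "wf (L - Id)"
    and x0_in_Field: "x0 \<in> Field L" and x0_least: "\<And>y. y \<in> Field L \<Longrightarrow> (x0, y) \<in> L"
    and T_in_fin_supp: "T \<in> fin_supp L"
begin

abbreviation Ref :: "('t \<times> nat) rel" where
  "Ref \<equiv> omega_times L"

text \<open>An interval of \<open>\<omega>^L\<close> is given by its upper end \<open>b\<close> and its lower end \<open>a\<close>:
  \<open>None\<close> stands for the half-open interval \<open>[0, b)\<close>, \<open>Some f\<close> for the open interval
  \<open>(f, b)\<close>. If the ends first differ (from the top) at \<open>x\<close>, by \<open>n\<close> units of \<open>\<omega>^x\<close>,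
  the interval has rank \<open>\<omega>\<cdot>x + \<lfloor>log\<^sub>2 n\<rfloor>\<close>, the pair \<open>(x, \<lfloor>log\<^sub>2 n\<rfloor>)\<close> of
  \<open>omega_times L\<close>. At the least coordinate \<open>x0\<close> this is the rank \<open>\<lfloor>log\<^sub>2 (k + 1)\<rfloor>\<close> of
  a chain of \<open>k = n - 1\<close> points, or of \<open>k = n\<close> points when \<open>0\<close> is included; hence
  \<open>origin_bonus\<close>.\<close>

definition lower :: "('t \<Rightarrow> nat) option \<Rightarrow> 't \<Rightarrow> nat" where
  "lower a = (case a of None \<Rightarrow> (\<lambda>_. 0) | Some f \<Rightarrow> f)"

definition lies_above :: "('t \<Rightarrow> nat) option \<Rightarrow> ('t \<Rightarrow> nat) \<Rightarrow> bool" where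
  "lies_above a c \<longleftrightarrow> (case a of None \<Rightarrow> True | Some f \<Rightarrow> lex_less L f c)"

definition origin_bonus :: "('t \<Rightarrow> nat) option \<Rightarrow> 't \<Rightarrow> nat" where
  "origin_bonus a x = (if a = None \<and> x = x0 then 1 else 0)"

definition gap_rank :: "('t \<Rightarrow> nat) option \<Rightarrow> ('t \<Rightarrow> nat) \<Rightarrow> 't \<times> nat" where
  "gap_rank a b = (if lower a = b then (x0, 0) else
     (top_diff L (lower a) b,
      floor_log (b (top_diff L (lower a) b) - lower a (top_diff L (lower a) b)
        + origin_bonus a (top_diff L (lower a) b))))"

lemma Well_order_Ref: "Well_order Ref"
  using linear wf by (intro Well_order_omega_times) (simp add: order_on_defs)

lemma Field_Ref: "Field Ref = Field L \<times> UNIV"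
  using linear by (intro Field_omega_times) (simp add: order_on_defs)

lemma Ref_trans: "(p, q) \<in> Ref \<Longrightarrow> (q, s) \<in> Ref \<Longrightarrow> (p, s) \<in> Ref"
  using Well_order_Ref by (auto simp: order_on_defs dest: transD)

lemma Ref_antisym: "(p, q) \<in> Ref \<Longrightarrow> (q, p) \<in> Ref \<Longrightarrow> p = q"
  using Well_order_Ref by (auto simp: order_on_defs dest: antisymD)

lemma Ref_le_less_trans: "(p, q) \<in> Ref \<Longrightarrow> (q, s) \<in> Ref - Id \<Longrightarrow> (p, s) \<in> Ref - Id"
  using Ref_trans Ref_antisym by blast

lemma Ref_less_le_trans: "(p, q) \<in> Ref - Id \<Longrightarrow> (q, s) \<in> Ref \<Longrightarrow> (p, s) \<in> Ref - Id"
  using Ref_trans Ref_antisym by blast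

lemma least_in_Ref: "p \<in> Field Ref \<Longrightarrow> ((x0, 0), p) \<in> Ref"
  using x0_in_Field x0_least unfolding Field_Ref by (cases p) (auto simp: omega_times_def)

lemma lower_in_fin_supp:
  "(case a of None \<Rightarrow> True | Some f \<Rightarrow> f \<in> fin_supp L) \<Longrightarrow> lower a \<in> fin_supp L"
  by (cases a) (auto simp: lower_def zero_in_fin_supp)

lemma lies_above_iff:
  assumes "c \<in> fin_supp L" and "c \<noteq> lower a"
  shows "lies_above a c \<longleftrightarrow> lex_less L (lower a) c"
  using assms zero_lex_less by (cases a) (auto simp: lies_above_def lower_def)

lemma lies_above_if_lex_less: "lex_less L (lower a) c \<Longrightarrow> lies_above a c"
  by (cases a) (auto simp: lies_above_def lower_def)

lemma lower_le_if_lies_above: "c \<in> fin_supp L \<Longrightarrow> lies_above a c \<Longrightarrow> lower a = c \<or> lex_less L (lower a) c"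
  by (cases "c = lower a") (auto simp: lies_above_iff)

lemma lies_above_trans:
  "lower a \<in> fin_supp L \<Longrightarrow> c \<in> fin_supp L \<Longrightarrow> e \<in> fin_supp L \<Longrightarrow> lies_above a c \<Longrightarrow>
    lex_less L c e \<Longrightarrow> lies_above a e"
  unfolding lies_above_def lower_def by (cases a) (auto intro: lex_less_trans)

lemma gap_rank_in_Field:
  "lower a \<in> fin_supp L \<Longrightarrow> b \<in> fin_supp L \<Longrightarrow> gap_rank a b \<in> Field Ref"
  using top_diff(1)[of "lower a" b] x0_in_Field unfolding gap_rank_def Field_Ref by auto

lemma gap_rank_eqI:
  assumes "lower a \<in> fin_supp L" "b \<in> fin_supp L" "lower a x \<noteq> b x"
    and "\<forall>y. (x, y) \<in> L \<and> y \<noteq> x \<longrightarrow> lower a y = b y"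
  shows "gap_rank a b = (x, floor_log (b x - lower a x + origin_bonus a x))"
  using top_diff_eqI[OF assms] assms(3) unfolding gap_rank_def by auto

lemma gap_rank_Some_eqI:
  assumes "c \<in> fin_supp L" "b \<in> fin_supp L" "c x \<noteq> b x"
    and "\<forall>y. (x, y) \<in> L \<and> y \<noteq> x \<longrightarrow> c y = b y"
  shows "gap_rank (Some c) b = (x, floor_log (b x - c x))"
  using gap_rank_eqI[of "Some c" b x] assms by (simp add: lower_def origin_bonus_def)

lemma gap_rank_below_top_diff:
  assumes "lower a \<in> fin_supp L" "b \<in> fin_supp L" "lower a \<noteq> b"
    and "lower a x = b x" "\<forall>y. (x, y) \<in> L \<and> y \<noteq> x \<longrightarrow> lower a y = b y" "x \<in> Field L"
  shows "(gap_rank a b, (x, k)) \<in> Ref - Id"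
proof -
  define z where "z = top_diff L (lower a) b"
  have z: "z \<in> Field L" "lower a z \<noteq> b z" using top_diff[OF assms(1-3)] z_def by auto
  then have "z \<noteq> x" "(x, z) \<notin> L" using assms(4,5) by auto
  then have "(z, x) \<in> L" using L_total[OF z(1) assms(6)] by blast
  then show ?thesis using \<open>z \<noteq> x\<close> z(1) assms(3,6) z_def by (simp add: gap_rank_def omega_times_def)
qed

lemma gap_rank_empty_less:
  assumes b: "b \<in> fin_supp L" and "b \<noteq> (\<lambda>_. 0)"
  shows "(gap_rank None (\<lambda>_. 0), gap_rank None b) \<in> Ref - Id"
proof -
  have zero: "lower None \<in> fin_supp L" and less: "lex_less L (lower None) b"
    using zero_in_fin_supp zero_lex_less[OF assms] by (simp_all add: lower_def)
  define x where "x = top_diff L (lower None) b"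
  note x = lex_less_top_diff[OF zero b less, folded x_def]
  have rb: "gap_rank None b = (x, floor_log (b x + origin_bonus None x))"
    using gap_rank_eqI[OF zero b, of x] x by (simp add: lower_def)
  have "gap_rank None b \<noteq> (x0, 0)"
  proof (cases "x = x0")
    case True
    then have "2 ^ 1 \<le> b x + origin_bonus None x"
      using x(2) by (simp add: origin_bonus_def lower_def)
    then have "1 \<le> floor_log (b x + origin_bonus None x)"
      using le_floor_log_iff[of "b x + origin_bonus None x" 1] x(2) by (simp add: lower_def)
    then show ?thesis using rb by auto
  qed (use rb in simp)
  moreover have "gap_rank None (\<lambda>_. 0) = (x0, 0)" by (simp add: gap_rank_def lower_def)
  ultimately show ?thesis using least_in_Ref gap_rank_in_Field[OF zero b] by simp
qed

lemma gap_rank_split_at_top_diff: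
  assumes a: "lower a \<in> fin_supp L" and b: "b \<in> fin_supp L" and c: "c \<in> fin_supp L"
    and x: "x \<in> Field L" "lower a x < c x" "c x < b x"
    and ab: "\<forall>y. (x, y) \<in> L \<and> y \<noteq> x \<longrightarrow> lower a y = b y"
    and cb: "\<forall>y. (x, y) \<in> L \<and> y \<noteq> x \<longrightarrow> c y = b y"
  shows "(gap_rank a c, gap_rank a b) \<in> Ref - Id \<or> (gap_rank (Some c) b, gap_rank a b) \<in> Ref - Id"
proof -
  define f where "f = lower a"
  have rab: "gap_rank a b = (x, floor_log (b x - f x + origin_bonus a x))"
    using gap_rank_eqI[OF a b, of x] x ab f_def by simp
  have rac: "gap_rank a c = (x, floor_log (c x - f x + origin_bonus a x))"
    using gap_rank_eqI[OF a c, of x] x ab cb f_def by simp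
  have rcb: "gap_rank (Some c) b = (x, floor_log (b x - c x))"
    using gap_rank_Some_eqI[OF c b] x cb by simp
  have "(c x - f x + origin_bonus a x) + (b x - c x) = b x - f x + origin_bonus a x"
    using x f_def by simp
  then have "floor_log (c x - f x + origin_bonus a x) < floor_log (b x - f x + origin_bonus a x) \<or>
      floor_log (b x - c x) < floor_log (b x - f x + origin_bonus a x)"
    using floor_log_lt_floor_log_add[of "c x - f x + origin_bonus a x" "b x - c x"] x f_def by simp
  then show ?thesis using rac rcb rab x(1) by (auto simp: omega_times_def)
qed

lemma gap_rank_split:
  assumes a: "lower a \<in> fin_supp L" and b: "b \<in> fin_supp L" and c: "c \<in> fin_supp L"
    and ac: "lies_above a c" and cb: "lex_less L c b"
  shows "(gap_rank a c, gap_rank a b) \<in> Ref - Id \<or> (gap_rank (Some c) b, gap_rank a b) \<in> Ref - Id"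
proof -
  define f where "f = lower a"
  have f: "f \<in> fin_supp L" using a f_def by simp
  have fc: "f = c \<or> lex_less L f c" using lower_le_if_lies_above[OF c ac] f_def by simp
  then have fb: "lex_less L f b" using cb lex_less_trans[OF f c b] by auto
  define x where "x = top_diff L f b"
  note x = lex_less_top_diff[OF f b fb, folded x_def]
  have c_x: "\<forall>y. (x, y) \<in> L \<and> y \<noteq> x \<longrightarrow> c y = b y" "f x \<le> c x" "c x \<le> b x"
    using lex_between_agree_above[OF f c b fc _ x(3)] cb by auto
  have rab: "gap_rank a b = (x, floor_log (b x - f x + origin_bonus a x))"
    unfolding f_def by (rule gap_rank_eqI[OF a b]) (use x f_def in auto)
  consider "c x = b x" | "f = c" | "c x = f x" "f \<noteq> c" | "f x < c x" "c x < b x"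
    using c_x x(2) by linarith
  then show ?thesis
  proof cases
    case 1
    have "c \<noteq> b" using cb lex_less_irrefl by auto
    then show ?thesis
      using gap_rank_below_top_diff[of "Some c" b x] c b 1 c_x(1) x(1) rab
      by (simp add: lower_def)
  next
    case 2
    then have "a = None" using ac lex_less_irrefl unfolding lies_above_def f_def lower_def
      by (cases a) auto
    moreover have "b \<noteq> (\<lambda>_. 0)" using fb lex_less_irrefl not_lex_less_zero by blast
    ultimately show ?thesis using gap_rank_empty_less[OF b] 2 f_def by (simp add: lower_def)
  next
    case 3
    then show ?thesis
      using gap_rank_below_top_diff[OF a c, of x] c_x(1) x(1,3) rab f_def by simp
  next
    case 4
    show ?thesis
      by (rule gap_rank_split_at_top_diff[OF a b c x(1) _ _ x(3)[unfolded f_def] c_x(1)])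
        (use 4 f_def in simp_all)
  qed
qed

lemma gap_rank_trunc_upd:
  assumes b: "b \<in> fin_supp L" and x: "x \<in> Field L" and v: "v < b x"
  shows "gap_rank (Some (trunc_upd L b x v)) b = (x, floor_log (b x - v))"
  using gap_rank_Some_eqI[OF trunc_upd_in_fin_supp[OF b x, of v] b, of x] v
  by (simp add: trunc_upd_at trunc_upd_above)

lemma gap_rank_extend_at_top_diff:
  assumes a: "lower a \<in> fin_supp L" and b: "b \<in> fin_supp L"
    and x: "x \<in> Field L" "lower a x < b x" "\<forall>y. (x, y) \<in> L \<and> y \<noteq> x \<longrightarrow> lower a y = b y"
    and i: "Suc i \<le> floor_log (b x - lower a x + origin_bonus a x)"
  shows "\<exists>c \<in> fin_supp L. lies_above a c \<and> lex_less L c b \<and>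
    ((x, i), gap_rank a c) \<in> Ref \<and> ((x, i), gap_rank (Some c) b) \<in> Ref"
proof -
  define f where "f = lower a"
  define n where "n = b x - f x + origin_bonus a x"
  have n: "2 * 2 ^ i \<le> n" using le_floor_log_iff[of n "Suc i"] i x(2) n_def f_def by simp
  have bonus: "origin_bonus a x \<le> 1" by (simp add: origin_bonus_def)
  then have "2 ^ i \<le> b x" using n n_def by (simp add: le_diff_conv)
  moreover have "(0::nat) < 2 ^ i" by simp
  ultimately have "b x - 2 ^ i < b x" by linarith
  define c where "c = trunc_upd L b x (b x - 2 ^ i)"
  have c: "c \<in> fin_supp L" using trunc_upd_in_fin_supp[OF b x(1)] c_def by simp
  have c_x: "c x = b x - 2 ^ i" and c_above: "\<forall>y. (x, y) \<in> L \<and> y \<noteq> x \<longrightarrow> c y = b y"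
    using trunc_upd_at trunc_upd_above c_def by auto
  have cb: "lex_less L c b" using trunc_upd_lex_less \<open>b x - 2 ^ i < b x\<close> c_def by simp
  have "gap_rank (Some c) b = (x, i)"
    using gap_rank_trunc_upd[OF b x(1) \<open>b x - 2 ^ i < b x\<close>] \<open>2 ^ i \<le> b x\<close> c_def by simp
  then have q_cb: "((x, i), gap_rank (Some c) b) \<in> Ref" using x(1) L_refl by (simp add: omega_times_def)
  show ?thesis
  proof (cases "f x < c x")
    case True
    have fc_above: "\<forall>y. (x, y) \<in> L \<and> y \<noteq> x \<longrightarrow> f y = c y" using c_above x(3) f_def by simp
    then have "lex_less L f c" unfolding lex_less_def using True by blast
    then have ac: "lies_above a c" using lies_above_if_lex_less f_def by simp
    have "gap_rank a c = (x, floor_log (c x - f x + origin_bonus a x))"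
      using gap_rank_eqI[OF a c, of x] True fc_above f_def by simp
    moreover have "2 ^ i \<le> c x - f x + origin_bonus a x" using True c_x n n_def by simp
    then have "i \<le> floor_log (c x - f x + origin_bonus a x)" using le_floor_log_iff True by simp
    ultimately have "((x, i), gap_rank a c) \<in> Ref" using x(1) by (simp add: omega_times_def)
    then show ?thesis using c ac cb q_cb by blast
  next
    case False
    then have "2 ^ i \<le> origin_bonus a x" using c_x n n_def by simp
    then have bonus_1: "origin_bonus a x = 1" and "(2::nat) ^ i \<le> 2 ^ 0" using bonus
      by (auto simp: origin_bonus_def split: if_splits)
    from this(2) have "i = 0" by (simp only: power_increasing_iff)
    from bonus_1 have "a = None" and "x = x0" by (auto simp: origin_bonus_def split: if_splits)
    then have "lies_above a c" and "((x, i), gap_rank a c) \<in> Ref"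
      using least_in_Ref[OF gap_rank_in_Field[OF a c]] \<open>i = 0\<close> by (auto simp: lies_above_def)
    then show ?thesis using c cb q_cb by blast
  qed
qed

lemma gap_rank_extend_below_top_diff:
  assumes a: "lower a \<in> fin_supp L" and b: "b \<in> fin_supp L"
    and x: "x \<in> Field L" "lower a x < b x" "\<forall>z. (x, z) \<in> L \<and> z \<noteq> x \<longrightarrow> lower a z = b z"
    and y: "(y, x) \<in> L" "y \<noteq> x"
  shows "\<exists>c \<in> fin_supp L. lies_above a c \<and> lex_less L c b \<and>
    ((y, i), gap_rank a c) \<in> Ref \<and> ((y, i), gap_rank (Some c) b) \<in> Ref"
proof -
  define f where "f = lower a"
  have y_Field: "y \<in> Field L" using y(1) by (rule FieldI1)
  define c where "c = trunc_upd L f y (f y + 2 ^ i)"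
  have c: "c \<in> fin_supp L" using trunc_upd_in_fin_supp[OF a y_Field] c_def f_def by simp
  have c_y: "c y = f y + 2 ^ i" and c_above: "\<forall>z. (y, z) \<in> L \<and> z \<noteq> y \<longrightarrow> c z = f z"
    using trunc_upd_at trunc_upd_above c_def by auto
  have "lex_less L f c" using lex_less_trunc_upd[of f y] c_def by simp
  then have ac: "lies_above a c" using lies_above_if_lex_less f_def by simp
  have cb_above: "\<forall>z. (x, z) \<in> L \<and> z \<noteq> x \<longrightarrow> c z = b z"
    using c_above x(3) y L_trans L_antisym f_def by metis
  have "c x = f x" using c_above y by simp
  then have "c x < b x" using x(2) f_def by simp
  then have cb: "lex_less L c b" unfolding lex_less_def using cb_above by blast
  have "gap_rank (Some c) b = (x, floor_log (b x - c x))"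
    using gap_rank_Some_eqI[OF c b _ cb_above] \<open>c x < b x\<close> by simp
  then have q_cb: "((y, i), gap_rank (Some c) b) \<in> Ref"
    using y y_Field x(1) by (simp add: omega_times_def)
  have "gap_rank a c = (y, floor_log (2 ^ i + origin_bonus a y))"
    using gap_rank_eqI[OF a c, of y] c_y c_above f_def by simp
  moreover have "i \<le> floor_log (2 ^ i + origin_bonus a y)"
    using le_floor_log_iff[of "2 ^ i + origin_bonus a y" i] by simp
  ultimately have "((y, i), gap_rank a c) \<in> Ref" using y_Field by (simp add: omega_times_def)
  then show ?thesis using c ac cb q_cb by blast
qed

lemma gap_rank_extend:
  assumes a: "lower a \<in> fin_supp L" and b: "b \<in> fin_supp L" and ab: "lies_above a b"
    and q: "(q, gap_rank a b) \<in> Ref - Id"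
  shows "\<exists>c \<in> fin_supp L. lies_above a c \<and> lex_less L c b \<and>
    (q, gap_rank a c) \<in> Ref \<and> (q, gap_rank (Some c) b) \<in> Ref"
proof (cases "lower a = b")
  case True
  then have "gap_rank a b = (x0, 0)" by (simp add: gap_rank_def)
  moreover have "((x0, 0), q) \<in> Ref" using q least_in_Ref by (blast intro: FieldI1)
  ultimately have False using q Ref_antisym[of q "(x0, 0)"] by auto
  then show ?thesis ..
next
  case False
  define f where "f = lower a"
  have f: "f \<in> fin_supp L" using a f_def by simp
  have "lex_less L f b" using lower_le_if_lies_above[OF b ab] False f_def by simp
  define x where "x = top_diff L f b"
  note x = lex_less_top_diff[OF f b \<open>lex_less L f b\<close>, folded x_def]
  have "gap_rank a b = (x, floor_log (b x - f x + origin_bonus a x))"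
    unfolding f_def by (rule gap_rank_eqI[OF a b]) (use x f_def in auto)
  moreover obtain y i where "q = (y, i)" by (cases q)
  ultimately have "(y, x) \<in> L \<and> y \<noteq> x \<or> y = x \<and> Suc i \<le> floor_log (b x - f x + origin_bonus a x)"
    using q by (auto simp: omega_times_def)
  then show ?thesis
    using gap_rank_extend_below_top_diff[OF a b] gap_rank_extend_at_top_diff[OF a b] x f_def \<open>q = (y, i)\<close>
    by blast
qed

definition seg :: "('t \<Rightarrow> nat) set" where
  "seg = {c \<in> fin_supp L. lex_less L c T}"

definition consecutive :: "('t \<Rightarrow> nat) set \<Rightarrow> ('t \<Rightarrow> nat) option \<Rightarrow> ('t \<Rightarrow> nat) \<Rightarrow> bool" where
  "consecutive E a b \<longleftrightarrow> (case a of None \<Rightarrow> True | Some e \<Rightarrow> e \<in> E) \<and> (b \<in> E \<or> b = T) \<and>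
     lies_above a b \<and> (\<forall>e\<in>E. \<not> (lies_above a e \<and> lex_less L e b))"

definition rank_of :: "('t \<Rightarrow> nat) set \<Rightarrow> 't \<times> nat" where
  "rank_of E = (SOME p. (\<exists>a b. consecutive E a b \<and> p = gap_rank a b) \<and>
     (\<forall>a b. consecutive E a b \<longrightarrow> (p, gap_rank a b) \<in> Ref))"

lemma seg_in_fin_supp: "c \<in> seg \<Longrightarrow> c \<in> fin_supp L"
  by (simp add: seg_def)

lemma consecutive_in_fin_supp:
  assumes "E \<subseteq> seg" and "consecutive E a b"
  shows "lower a \<in> fin_supp L" and "b \<in> fin_supp L"
  using assms T_in_fin_supp lower_in_fin_supp[of a] unfolding consecutive_def seg_def
  by (auto split: option.splits)

lemma consecutive_upper_le_T:
  "E \<subseteq> seg \<Longrightarrow> consecutive E a b \<Longrightarrow> b = T \<or> lex_less L b T"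
  unfolding consecutive_def seg_def by auto

lemma consecutive_below_exists:
  assumes "finite E" "E \<subseteq> seg" "b \<in> E \<or> b = T"
  shows "\<exists>a. consecutive E a b"
proof (cases "\<exists>e\<in>E. lex_less L e b")
  case True
  let ?D = "{e\<in>E. lex_less L e b}"
  have "finite ?D" "?D \<noteq> {}" "?D \<subseteq> Field (omega_pow L)"
    using assms True by (auto simp: Field_omega_pow seg_def)
  then obtain f where f: "f \<in> ?D" "\<forall>e\<in>?D. (e, f) \<in> omega_pow L"
    using finite_Linear_order_has_greatest[OF Linear_order_omega_pow] by meson
  have "\<not> (lex_less L f e \<and> lex_less L e b)" if "e \<in> E" for e
    using f that assms(2) lex_less_asym by (auto simp: omega_pow_iff seg_def)
  then have "consecutive E (Some f) b" using f assms(3) by (auto simp: consecutive_def lies_above_def)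
  then show ?thesis ..
next
  case False
  then have "consecutive E None b" using assms(3) by (auto simp: consecutive_def lies_above_def)
  then show ?thesis ..
qed

lemma finite_consecutive: "finite E \<Longrightarrow> finite {(a, b). consecutive E a b}"
proof -
  assume "finite E"
  moreover have "{(a, b). consecutive E a b} \<subseteq> insert None (Some ` E) \<times> insert T E"
    unfolding consecutive_def by (auto split: option.splits)
  ultimately show ?thesis by (auto intro: finite_subset)
qed

lemma rank_of:
  assumes "finite E" and "E \<subseteq> seg"
  shows "\<exists>a b. consecutive E a b \<and> rank_of E = gap_rank a b"
    and "\<And>a b. consecutive E a b \<Longrightarrow> (rank_of E, gap_rank a b) \<in> Ref"
proof -
  let ?Q = "(\<lambda>(a, b). gap_rank a b) ` {(a, b). consecutive E a b}"
  have "finite ?Q" using finite_consecutive[OF assms(1)] by simp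
  moreover have "?Q \<noteq> {}" using consecutive_below_exists[OF assms, of T] by auto
  moreover have "?Q \<subseteq> Field Ref"
    using consecutive_in_fin_supp[OF assms(2)] gap_rank_in_Field by auto
  moreover have "Linear_order Ref" using Well_order_Ref by (simp add: order_on_defs)
  ultimately obtain p where "p \<in> ?Q" "\<forall>y\<in>?Q. (p, y) \<in> Ref"
    using finite_Linear_order_has_least by meson
  then have "(\<exists>a b. consecutive E a b \<and> p = gap_rank a b) \<and>
      (\<forall>a b. consecutive E a b \<longrightarrow> (p, gap_rank a b) \<in> Ref)" by auto
  then have "(\<exists>a b. consecutive E a b \<and> rank_of E = gap_rank a b) \<and>
      (\<forall>a b. consecutive E a b \<longrightarrow> (rank_of E, gap_rank a b) \<in> Ref)"
    unfolding rank_of_def by (rule someI)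
  then show "\<exists>a b. consecutive E a b \<and> rank_of E = gap_rank a b"
    and "\<And>a b. consecutive E a b \<Longrightarrow> (rank_of E, gap_rank a b) \<in> Ref" by blast+
qed

lemma le_rank_of_iff:
  assumes "finite E" and "E \<subseteq> seg"
  shows "(q, rank_of E) \<in> Ref \<longleftrightarrow>
    q \<in> Field Ref \<and> (\<forall>a b. consecutive E a b \<longrightarrow> (q, gap_rank a b) \<in> Ref)"
  using rank_of[OF assms] Ref_trans by (metis FieldI1)

lemma rank_of_empty: "rank_of {} = gap_rank None T"
proof -
  have "consecutive {} a b \<longleftrightarrow> a = None \<and> b = T" for a b
    unfolding consecutive_def lies_above_def by (cases a) auto
  then show ?thesis using rank_of(1)[of "{}"] by auto
qed

lemma consecutive_insert:
  assumes E: "E \<subseteq> seg" and ab: "consecutive E a b" and c: "c \<in> seg"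
    and ac: "lies_above a c" and cb: "lex_less L c b"
  shows "consecutive (insert c E) a c" and "consecutive (insert c E) (Some c) b"
proof -
  have a: "lower a \<in> fin_supp L" and b: "b \<in> fin_supp L" using consecutive_in_fin_supp[OF E ab] by auto
  have c_supp: "c \<in> fin_supp L" using c by (rule seg_in_fin_supp)
  have E_supp: "e \<in> fin_supp L" if "e \<in> E" for e using that E seg_in_fin_supp by auto
  have "\<not> (lies_above a e \<and> lex_less L e c)" if "e \<in> E" for e
    using ab that cb lex_less_trans[OF E_supp[OF that] c_supp b] unfolding consecutive_def by blast
  then show "consecutive (insert c E) a c"
    using ab ac lex_less_irrefl unfolding consecutive_def by (auto split: option.splits)
  have "\<not> (lex_less L c e \<and> lex_less L e b)" if "e \<in> E" for e
    using ab that lies_above_trans[OF a c_supp E_supp[OF that] ac] unfolding consecutive_def by blast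
  then show "consecutive (insert c E) (Some c) b"
    using ab cb lex_less_irrefl unfolding consecutive_def lies_above_def by auto
qed

lemma consecutive_upper_unique:
  assumes E: "E \<subseteq> seg" and ab: "consecutive E a b" and ab': "consecutive E a b'"
  shows "b = b'"
proof -
  have not_less: "\<not> lex_less L b b'" if ab: "consecutive E a b" and ab': "consecutive E a b'" for b b'
  proof
    assume bb': "lex_less L b b'"
    have b: "b \<in> fin_supp L" and b': "b' \<in> fin_supp L" using consecutive_in_fin_supp[OF E] ab ab' by auto
    have "b \<noteq> T"
      using consecutive_upper_le_T[OF E ab'] bb' lex_less_asym[OF b' T_in_fin_supp] lex_less_irrefl by auto
    then show False using ab ab' bb' unfolding consecutive_def by blast
  qed
  show ?thesis
    using not_less[OF ab ab'] not_less[OF ab' ab] lex_less_total consecutive_in_fin_supp[OF E] ab ab'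
    by metis
qed

lemma consecutive_lower_unique:
  assumes E: "E \<subseteq> seg" and ab: "consecutive E a b" and a'b: "consecutive E a' b"
  shows "a = a'"
proof -
  have not_above: "\<not> lies_above a e" if "consecutive E a b" "consecutive E (Some e) b" for a e
    using that unfolding consecutive_def lies_above_def by auto
  have E_supp: "e \<in> fin_supp L" if "e \<in> E" for e using that E seg_in_fin_supp by auto
  show ?thesis
  proof (cases a; cases a')
    fix e' assume "a = None" "a' = Some e'"
    then show ?thesis using not_above[of a e'] ab a'b by (simp add: lies_above_def)
  next
    fix e assume "a = Some e" "a' = None"
    then show ?thesis using not_above[of a' e] ab a'b by (simp add: lies_above_def)
  next
    fix e e' assume a: "a = Some e" and a': "a' = Some e'"
    then have "e \<in> E" "e' \<in> E" using ab a'b by (auto simp: consecutive_def)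
    then show ?thesis
      using lex_less_total[OF E_supp E_supp] not_above[of a e'] not_above[of a' e] ab a'b a a'
      by (auto simp: lies_above_def)
  qed simp
qed

lemma consecutive_insert_cases:
  assumes E: "E \<subseteq> seg" and ab: "consecutive E a b" and c: "c \<in> seg"
    and ac: "lies_above a c" and cb: "lex_less L c b" and a'b': "consecutive (insert c E) a' b'"
  shows "consecutive E a' b' \<or> (a' = a \<and> b' = c) \<or> (a' = Some c \<and> b' = b)"
proof -
  have E': "insert c E \<subseteq> seg" using E c by simp
  note split = consecutive_insert[OF E ab c ac cb]
  consider "a' = Some c" | "b' = c" | "a' \<noteq> Some c" "b' \<noteq> c" by blast
  then show ?thesis
  proof cases
    case 1
    then show ?thesis using consecutive_upper_unique[OF E' split(2)] a'b' by blast
  next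
    case 2
    then show ?thesis using consecutive_lower_unique[OF E' split(1)] a'b' by blast
  next
    case 3
    then have "consecutive E a' b'"
      using a'b' unfolding consecutive_def by (auto split: option.splits)
    then show ?thesis by blast
  qed
qed

lemma rank_of_extend:
  assumes fin: "finite E" and E: "E \<subseteq> seg" and ab: "consecutive E a b"
    and q: "(q, rank_of E) \<in> Ref - Id"
  shows "\<exists>c \<in> seg. lies_above a c \<and> lex_less L c b \<and> (q, rank_of (insert c E)) \<in> Ref"
proof -
  have a: "lower a \<in> fin_supp L" and b: "b \<in> fin_supp L" using consecutive_in_fin_supp[OF E ab] by auto
  have "(rank_of E, gap_rank a b) \<in> Ref" using rank_of(2)[OF fin E ab] .
  then have "(q, gap_rank a b) \<in> Ref - Id" using q Ref_less_le_trans by blast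
  moreover have "lies_above a b" using ab by (simp add: consecutive_def)
  ultimately obtain c where c: "c \<in> fin_supp L" and ac: "lies_above a c" and cb: "lex_less L c b"
    and q_ac: "(q, gap_rank a c) \<in> Ref" and q_cb: "(q, gap_rank (Some c) b) \<in> Ref"
    using gap_rank_extend[OF a b] by blast
  have "c \<in> seg"
    using consecutive_upper_le_T[OF E ab] cb lex_less_trans[OF c b T_in_fin_supp] c
    by (auto simp: seg_def)
  have "(q, gap_rank a' b') \<in> Ref" if "consecutive (insert c E) a' b'" for a' b'
  proof -
    have "consecutive E a' b' \<or> (a' = a \<and> b' = c) \<or> (a' = Some c \<and> b' = b)"
      by (rule consecutive_insert_cases[OF E ab \<open>c \<in> seg\<close> ac cb that])
    moreover have "(q, gap_rank a' b') \<in> Ref" if "consecutive E a' b'"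
      using rank_of(2)[OF fin E that] q Ref_trans by blast
    ultimately show ?thesis using q_ac q_cb by blast
  qed
  moreover have "q \<in> Field Ref" using q by (blast intro: FieldI1)
  ultimately have "(q, rank_of (insert c E)) \<in> Ref"
    using le_rank_of_iff[of "insert c E"] fin E \<open>c \<in> seg\<close> by simp
  then show ?thesis using \<open>c \<in> seg\<close> ac cb by blast
qed

lemma rank_of_drop:
  assumes fin: "finite E" and E: "E \<subseteq> seg"
  shows "\<exists>a b. consecutive E a b \<and> (\<forall>c \<in> seg. lies_above a c \<and> lex_less L c b \<longrightarrow>
    (rank_of (insert c E), rank_of E) \<in> Ref - Id)"
proof -
  obtain a b where ab: "consecutive E a b" and R: "rank_of E = gap_rank a b"
    using rank_of(1)[OF fin E] by blast
  have a: "lower a \<in> fin_supp L" and b: "b \<in> fin_supp L" using consecutive_in_fin_supp[OF E ab] by auto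
  have "(rank_of (insert c E), rank_of E) \<in> Ref - Id"
    if c: "c \<in> seg" and ac: "lies_above a c" and cb: "lex_less L c b" for c
  proof -
    note split = consecutive_insert[OF E ab c ac cb]
    have fin': "finite (insert c E)" and E': "insert c E \<subseteq> seg" using fin E c by auto
    have le_ac: "(rank_of (insert c E), gap_rank a c) \<in> Ref"
      and le_cb: "(rank_of (insert c E), gap_rank (Some c) b) \<in> Ref"
      using rank_of(2)[OF fin' E'] split by blast+
    from gap_rank_split[OF a b seg_in_fin_supp[OF c] ac cb] show ?thesis
      unfolding R using Ref_le_less_trans[OF le_ac] Ref_le_less_trans[OF le_cb] by blast
  qed
  then show ?thesis using ab by blast
qed

end

section \<open>Orders isomorphic to an initial segment of \<open>\<omega>^L\<close>\<close>

locale seg_iso = interval_ranks +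
  fixes r :: "'x rel" and enc
  assumes enc_bij: "bij_betw enc (Field r) seg"
    and enc_ord: "\<And>p q. p \<in> Field r \<Longrightarrow> q \<in> Field r \<Longrightarrow> (p, q) \<in> r \<longleftrightarrow> (enc p, enc q) \<in> omega_pow L"
begin

lemma enc_in_seg: "p \<in> Field r \<Longrightarrow> enc p \<in> seg"
  using enc_bij by (auto simp: bij_betw_def)

lemma enc_in_fin_supp: "p \<in> Field r \<Longrightarrow> enc p \<in> fin_supp L"
  using enc_in_seg seg_in_fin_supp by blast

lemma enc_inj: "p \<in> Field r \<Longrightarrow> q \<in> Field r \<Longrightarrow> enc p = enc q \<Longrightarrow> p = q"
  using enc_bij by (auto simp: bij_betw_def inj_on_def)

lemma enc_lex_less_iff:
  assumes "p \<in> Field r" "q \<in> Field r"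
  shows "lex_less L (enc p) (enc q) \<longleftrightarrow> (p, q) \<in> r \<and> p \<noteq> q"
proof -
  have "lex_less L (enc p) (enc q) \<longleftrightarrow> (enc p, enc q) \<in> omega_pow L \<and> enc p \<noteq> enc q"
    using assms enc_in_fin_supp by (auto simp: omega_pow_iff lex_less_irrefl)
  then show ?thesis using assms enc_ord enc_inj by blast
qed

lemma enc_le_iff:
  "p \<in> Field r \<Longrightarrow> q \<in> Field r \<Longrightarrow> enc p = enc q \<or> lex_less L (enc p) (enc q) \<longleftrightarrow> (p, q) \<in> r"
  using enc_ord enc_in_fin_supp by (simp add: omega_pow_iff)

lemma Linear_order_r: "Linear_order r"
proof -
  have lin: "Linear_order (omega_pow L)" by (rule Linear_order_omega_pow)
  have "refl_on (Field r) r" using enc_ord enc_in_fin_supp by (auto simp: refl_on_def omega_pow_iff)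
  moreover have "trans r"
  proof (rule transI)
    fix x y z assume "(x, y) \<in> r" "(y, z) \<in> r"
    moreover have "x \<in> Field r" "y \<in> Field r" "z \<in> Field r"
      using calculation by (auto intro: FieldI1 FieldI2)
    ultimately show "(x, z) \<in> r"
      using enc_ord lin unfolding order_on_defs by (metis transD)
  qed
  moreover have "antisym r"
  proof (rule antisymI)
    fix x y assume "(x, y) \<in> r" "(y, x) \<in> r"
    moreover have "x \<in> Field r" "y \<in> Field r" using calculation by (auto intro: FieldI1 FieldI2)
    ultimately show "x = y" using enc_ord enc_inj lin unfolding order_on_defs by (metis antisymD)
  qed
  moreover have "total_on (Field r) r"
    using enc_le_iff enc_in_fin_supp lex_less_total unfolding total_on_def by metis
  ultimately show ?thesis by (auto simp: order_on_defs intro: FieldI1 FieldI2)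
qed

lemma consecutive_cut:
  assumes ab: "consecutive (enc ` F) a b" and F: "F \<subseteq> Field r"
  shows "is_cut r F (\<lambda>x. lex_less L (enc x) b)"
  unfolding is_cut_def
proof (intro ballI impI)
  fix x y assume "x \<in> F" "y \<in> F" and xy: "(x, y) \<in> r \<and> lex_less L (enc y) b"
  have "enc ` F \<subseteq> seg" using F enc_in_seg by blast
  then have "b \<in> fin_supp L" using consecutive_in_fin_supp(2) ab by blast
  moreover have "x \<in> Field r" "y \<in> Field r" using F \<open>x \<in> F\<close> \<open>y \<in> F\<close> by auto
  ultimately show "lex_less L (enc x) b"
    using xy enc_le_iff[of x y] enc_in_fin_supp lex_less_trans[of "enc x" "enc y" b] by auto
qed

lemma in_gap_consecutive_between:
  assumes F: "F \<subseteq> Field r" and ab: "consecutive (enc ` F) a b" and c: "c \<in> Field r - F"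
    and gap: "in_gap r F (\<lambda>x. lex_less L (enc x) b) c"
  shows "lies_above a (enc c)" and "lex_less L (enc c) b"
proof -
  show "lies_above a (enc c)"
  proof (cases a)
    case (Some f)
    then obtain xa where xa: "xa \<in> F" "f = enc xa" using ab by (auto simp: consecutive_def)
    then have "lex_less L (enc xa) b" using ab Some by (simp add: consecutive_def lies_above_def)
    then have "(xa, c) \<in> r" using gap xa by (simp add: in_gap_def)
    then show ?thesis using enc_lex_less_iff[of xa c] xa c F Some by (auto simp: lies_above_def)
  qed (simp add: lies_above_def)
  show "lex_less L (enc c) b"
  proof (cases "b = T")
    case True
    then show ?thesis using enc_in_seg c by (simp add: seg_def)
  next
    case False
    then obtain xb where xb: "xb \<in> F" "b = enc xb" using ab by (auto simp: consecutive_def)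
    then have "(xb, c) \<notin> r" using gap lex_less_irrefl by (simp add: in_gap_def)
    moreover have "c \<noteq> xb" using xb c by auto
    ultimately have "(c, xb) \<in> r" using Linear_order_in_diff_Id[OF Linear_order_r] xb c F by blast
    then show ?thesis using enc_lex_less_iff[of c xb] \<open>c \<noteq> xb\<close> xb c F by auto
  qed
qed

lemma between_in_gap_consecutive:
  assumes F: "F \<subseteq> Field r" and ab: "consecutive (enc ` F) a b" and c: "c \<in> Field r"
    and ac: "lies_above a (enc c)" and cb: "lex_less L (enc c) b"
  shows "in_gap r F (\<lambda>x. lex_less L (enc x) b) c"
  unfolding in_gap_def
proof
  fix x assume x: "x \<in> F"
  have E: "enc ` F \<subseteq> seg" using F enc_in_seg by blast
  have b: "b \<in> fin_supp L" using consecutive_in_fin_supp(2)[OF E ab] .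
  have c_supp: "enc c \<in> fin_supp L" and x_supp: "enc x \<in> fin_supp L"
    using c x F enc_in_fin_supp by auto
  show "(x, c) \<in> r \<longleftrightarrow> lex_less L (enc x) b"
  proof (cases "lex_less L (enc x) b")
    case True
    then have "\<not> lies_above a (enc x)" using ab x by (auto simp: consecutive_def)
    then obtain f where f: "a = Some f" "\<not> lex_less L f (enc x)"
      by (cases a) (auto simp: lies_above_def)
    have f_supp: "f \<in> fin_supp L"
      using f(1) consecutive_in_fin_supp(1)[OF E ab] by (simp add: lower_def)
    have "enc x = f \<or> lex_less L (enc x) f" using lex_less_total[OF x_supp f_supp] f(2) by blast
    moreover have "lex_less L f (enc c)" using ac f(1) by (simp add: lies_above_def)
    ultimately have "lex_less L (enc x) (enc c)"
      using lex_less_trans[OF x_supp f_supp c_supp] by blast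
    then show ?thesis using True enc_lex_less_iff x c F by auto
  next
    case False
    then have "b = enc x \<or> lex_less L b (enc x)" using lex_less_total[OF x_supp b] by blast
    then have "lex_less L (enc c) (enc x)" using cb lex_less_trans[OF c_supp b x_supp] by blast
    then have "(c, x) \<in> r" "c \<noteq> x" using enc_lex_less_iff[of c x] x c F by auto
    then have "(x, c) \<notin> r" using Linear_order_in_diff_Id[OF Linear_order_r, of c x] x c F by blast
    then show ?thesis using False by blast
  qed
qed

lemma cut_consecutive_exists:
  assumes fin: "finite F" and F: "F \<subseteq> Field r" and P: "is_cut r F P"
  shows "\<exists>a b. consecutive (enc ` F) a b \<and> (\<forall>x\<in>F. P x \<longleftrightarrow> lex_less L (enc x) b)"
proof -
  have E: "finite (enc ` F)" "enc ` F \<subseteq> seg" using fin F enc_in_seg by auto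
  have lin: "Linear_order r" by (rule Linear_order_r)
  obtain b where b: "b \<in> enc ` F \<or> b = T" and "\<forall>x\<in>F. P x \<longleftrightarrow> lex_less L (enc x) b"
  proof (cases "\<forall>x\<in>F. P x")
    case True
    then show ?thesis using that[of T] F enc_in_seg by (auto simp: seg_def)
  next
    case False
    then obtain xb where xb: "xb \<in> F" "\<not> P xb" "\<forall>x\<in>{x\<in>F. \<not> P x}. (xb, x) \<in> r"
      using finite_Linear_order_has_least[OF lin, of "{x\<in>F. \<not> P x}"] fin F by auto
    have "P x \<longleftrightarrow> lex_less L (enc x) (enc xb)" if x: "x \<in> F" for x
    proof
      assume "P x"
      then have "(xb, x) \<notin> r" using P xb x by (auto simp: is_cut_def)
      moreover have "x \<noteq> xb" using \<open>P x\<close> xb by auto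
      ultimately show "lex_less L (enc x) (enc xb)"
        using enc_lex_less_iff[of x xb] lin x xb F unfolding order_on_defs total_on_def by blast
    next
      assume "lex_less L (enc x) (enc xb)"
      then show "P x" using xb x enc_lex_less_iff[of x xb] enc_lex_less_iff[of xb x] F
        lex_less_asym[of "enc x" "enc xb"] enc_in_fin_supp by auto
    qed
    then show ?thesis using that[of "enc xb"] xb by blast
  qed
  then show ?thesis using consecutive_below_exists[OF E b] by blast
qed

lemma rank_of_enc_extend:
  assumes fin: "finite F" and F: "F \<subseteq> Field r" and P: "is_cut r F P"
    and q: "(q, rank_of (enc ` F)) \<in> Ref - Id"
  shows "\<exists>c \<in> Field r - F. in_gap r F P c \<and> (q, rank_of (enc ` insert c F)) \<in> Ref"
proof -
  have E: "finite (enc ` F)" "enc ` F \<subseteq> seg" using fin F enc_in_seg by auto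
  obtain a b where ab: "consecutive (enc ` F) a b" and Pb: "\<forall>x\<in>F. P x \<longleftrightarrow> lex_less L (enc x) b"
    using cut_consecutive_exists[OF fin F P] by blast
  obtain c' where "c' \<in> seg" and ac: "lies_above a c'" and cb: "lex_less L c' b"
    and q_c: "(q, rank_of (insert c' (enc ` F))) \<in> Ref"
    using rank_of_extend[OF E ab q] by blast
  have "c' \<in> enc ` Field r" using \<open>c' \<in> seg\<close> enc_bij by (simp add: bij_betw_def)
  then obtain c where c: "c \<in> Field r" "enc c = c'" by blast
  have "\<forall>e \<in> enc ` F. \<not> (lies_above a e \<and> lex_less L e b)"
    using ab by (simp add: consecutive_def)
  then have "c \<notin> F" using ac cb c(2) by blast
  then have "in_gap r F (\<lambda>x. lex_less L (enc x) b) c"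
    using between_in_gap_consecutive[OF F ab c(1)] ac cb c(2) by blast
  then have "in_gap r F P c" using Pb by (simp add: in_gap_def)
  moreover have "(q, rank_of (enc ` insert c F)) \<in> Ref" using q_c c(2) by simp
  ultimately show ?thesis using c(1) \<open>c \<notin> F\<close> by blast
qed

lemma rank_of_enc_drop:
  assumes fin: "finite F" and F: "F \<subseteq> Field r"
  shows "\<exists>P. is_cut r F P \<and>
    (\<forall>c \<in> Field r - F. in_gap r F P c \<longrightarrow> (rank_of (enc ` insert c F), rank_of (enc ` F)) \<in> Ref - Id)"
proof -
  have E: "finite (enc ` F)" "enc ` F \<subseteq> seg" using fin F enc_in_seg by auto
  obtain a b where ab: "consecutive (enc ` F) a b" and drop: "\<forall>c \<in> seg. lies_above a c \<and>
      lex_less L c b \<longrightarrow> (rank_of (insert c (enc ` F)), rank_of (enc ` F)) \<in> Ref - Id"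
    using rank_of_drop[OF E] by blast
  have "(rank_of (enc ` insert c F), rank_of (enc ` F)) \<in> Ref - Id"
    if c: "c \<in> Field r - F" "in_gap r F (\<lambda>x. lex_less L (enc x) b) c" for c
  proof -
    have "lies_above a (enc c) \<and> lex_less L (enc c) b" using in_gap_consecutive_between[OF F ab] c by blast
    moreover have "enc c \<in> seg" using c enc_in_seg by blast
    ultimately show ?thesis using drop by simp
  qed
  with consecutive_cut[OF ab F] show ?thesis by blast
qed

sublocale rank_function r Ref "\<lambda>F. rank_of (enc ` F)"
  using Linear_order_r Well_order_Ref rank_of_enc_extend rank_of_enc_drop
  by unfold_locales blast+

end

section \<open>\<open>\<omega>^\<beta>\<cdot>m\<close> as an initial segment of \<open>\<omega>^(\<beta>+1)\<close>\<close>

lemma fin_supp_top_ext_iff: "F \<in> fin_supp (top_ext L) \<longleftrightarrow> (\<lambda>x. F (Some x)) \<in> fin_supp L"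
proof -
  have "{x. F (Some x) \<noteq> 0} = Some -` {z. F z \<noteq> 0}" by auto
  moreover have "{z. F z \<noteq> 0} \<subseteq> insert None (Some ` {x. F (Some x) \<noteq> 0})"
    by (auto intro: option.exhaust)
  ultimately have "finite {z. F z \<noteq> 0} \<longleftrightarrow> finite {x. F (Some x) \<noteq> 0}"
    by (metis finite_imageI finite_insert finite_subset finite_vimageI inj_Some)
  moreover have "{z. F z \<noteq> 0} \<subseteq> Field (top_ext L) \<longleftrightarrow> {x. F (Some x) \<noteq> 0} \<subseteq> Field L"
    unfolding Field_top_ext by (auto intro: option.exhaust)
  ultimately show ?thesis by (simp add: fin_supp_def)
qed

lemma lex_less_top_ext_iff:
  assumes "G \<in> fin_supp (top_ext L)"
  shows "lex_less (top_ext L) F G \<longleftrightarrow>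
    F None < G None \<or> F None = G None \<and> lex_less L (\<lambda>x. F (Some x)) (\<lambda>x. G (Some x))"
proof
  assume "lex_less (top_ext L) F G"
  then obtain z where z: "F z < G z" "\<forall>y. (z, y) \<in> top_ext L \<and> y \<noteq> z \<longrightarrow> F y = G y"
    unfolding lex_less_def by blast
  show "F None < G None \<or> F None = G None \<and> lex_less L (\<lambda>x. F (Some x)) (\<lambda>x. G (Some x))"
  proof (cases z)
    case (Some x)
    then have "x \<in> Field L"
      using fin_supp_nonzero_in_Field[OF assms, of z] z(1) by (auto simp: Field_top_ext)
    then have "F None = G None" using z(2) Some by (simp add: top_ext_iff)
    moreover have "lex_less L (\<lambda>x. F (Some x)) (\<lambda>x. G (Some x))"
      unfolding lex_less_def using z Some by (intro exI[of _ x]) (auto simp: top_ext_iff)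
    ultimately show ?thesis by blast
  qed (use z in simp)
next
  assume "F None < G None \<or> F None = G None \<and> lex_less L (\<lambda>x. F (Some x)) (\<lambda>x. G (Some x))"
  then show "lex_less (top_ext L) F G"
  proof
    assume "F None < G None"
    then show ?thesis unfolding lex_less_def by (intro exI[of _ None]) (auto simp: top_ext_iff split: option.splits)
  next
    assume "F None = G None \<and> lex_less L (\<lambda>x. F (Some x)) (\<lambda>x. G (Some x))"
    then obtain x where "F None = G None" "F (Some x) < G (Some x)"
      and "\<forall>y. (x, y) \<in> L \<and> y \<noteq> x \<longrightarrow> F (Some y) = G (Some y)"
      unfolding lex_less_def by blast
    then show ?thesis unfolding lex_less_def
      by (intro exI[of _ "Some x"]) (auto simp: top_ext_iff split: option.splits)
  qed
qed

lemma Field_ord_mult_nat: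
  assumes "Refl r" shows "Field (ord_mult_nat r m) = {..<m} \<times> Field r"
proof
  show "Field (ord_mult_nat r m) \<subseteq> {..<m} \<times> Field r"
    unfolding ord_mult_nat_def Field_def by auto
  have "(p, p) \<in> ord_mult_nat r m" if "p \<in> {..<m} \<times> Field r" for p
    using that assms by (auto simp: ord_mult_nat_def refl_on_def)
  then show "{..<m} \<times> Field r \<subseteq> Field (ord_mult_nat r m)" by (auto intro: FieldI1)
qed

lemma dir_image_inverse_iff:
  assumes "\<And>p. g (f p) = p" and "\<And>u. f (g u) = u"
  shows "(u, v) \<in> dir_image R f \<longleftrightarrow> (g u, g v) \<in> R"
proof
  assume "(u, v) \<in> dir_image R f"
  then obtain p q where "u = f p" "v = f q" "(p, q) \<in> R" unfolding dir_image_def by blast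
  then show "(g u, g v) \<in> R" by (simp add: assms(1))
next
  assume "(g u, g v) \<in> R"
  then have "(f (g u), f (g v)) \<in> dir_image R f" unfolding dir_image_def by blast
  then show "(u, v) \<in> dir_image R f" by (simp add: assms(2))
qed

lemma init_seg_omega_times_top_ext_ordIso:
  assumes "Well_order L"
  shows "init_seg (omega_times (top_ext L)) (None, k) =o ord_plus_nat (omega_times L) k"
proof -
  define to_sum :: "'a option \<times> nat \<Rightarrow> ('a \<times> nat) + nat" where
    "to_sum p = (case fst p of Some x \<Rightarrow> Inl (x, snd p) | None \<Rightarrow> Inr (snd p))" for p
  define from_sum :: "('a \<times> nat) + nat \<Rightarrow> 'a option \<times> nat" where
    "from_sum u = (case u of Inl p \<Rightarrow> (Some (fst p), snd p) | Inr n \<Rightarrow> (None, n))" for u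
  have from_to: "from_sum (to_sum p) = p" for p
    by (cases p; cases "fst p") (auto simp: from_sum_def to_sum_def)
  have to_from: "to_sum (from_sum u) = u" for u
    by (cases u) (auto simp: from_sum_def to_sum_def)
  let ?R = "init_seg (omega_times (top_ext L)) (None, k)"
  have "Well_order (top_ext L)" using assms by (rule Well_order_top_ext)
  then have W: "Well_order ?R" by (intro Well_order_init_seg Well_order_omega_times)
  have inj: "inj_on to_sum (Field ?R)" by (metis from_to inj_onI)
  have FL: "Field (omega_times L) = Field L \<times> UNIV"
    using assms by (intro Field_omega_times) (simp add: order_on_defs)
  have "(u, v) \<in> dir_image ?R to_sum \<longleftrightarrow> (u, v) \<in> ord_plus_nat (omega_times L) k" for u v
    unfolding dir_image_inverse_iff[OF from_to to_from] unfolding init_seg_def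
    by (cases u; cases v)
       (auto simp: from_sum_def ord_plus_nat_def underS_def omega_times_iff top_ext_iff Field_top_ext FL)
  then have "dir_image ?R to_sum = ord_plus_nat (omega_times L) k" by (metis set_eqI surj_pair)
  then show ?thesis using dir_image_ordIso[OF W inj] by simp
qed

text \<open>\<open>(i, f)\<close> is the ordinal \<open>\<omega>^\<beta>\<cdot>i + f\<close>, i.e. \<open>f\<close> with \<open>i\<close> as extra top digit.\<close>
definition mult_enc :: "nat \<times> ('b \<Rightarrow> nat) \<Rightarrow> 'b option \<Rightarrow> nat" where
  "mult_enc p = case_option (fst p) (snd p)"

lemma mult_enc_None [simp]: "mult_enc (i, f) None = i"
  and mult_enc_Some [simp]: "mult_enc (i, f) (Some x) = f x"
  by (simp_all add: mult_enc_def)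

lemma mult_enc_inj: "inj mult_enc"
proof (rule injI)
  fix p q assume eq: "mult_enc p = mult_enc q"
  obtain i f j g where p: "p = (i, f)" and q: "q = (j, g)" by (cases p; cases q)
  have "i = j" using fun_cong[OF eq, of None] p q by simp
  moreover have "f = g" using fun_cong[OF eq, of "Some x" for x] p q by auto
  ultimately show "p = q" using p q by simp
qed

lemma mult_enc_decompose: "mult_enc (F None, \<lambda>x. F (Some x)) = F"
  by (auto simp: mult_enc_def split: option.splits)

locale omega_pow_mult =
  fixes Bo :: "'b rel" and m :: nat and b0 :: 'b
  assumes Bo: "Well_order Bo" and b0_in_Field: "b0 \<in> Field Bo"
    and b0_least: "\<And>y. y \<in> Field Bo \<Longrightarrow> (b0, y) \<in> Bo" and m_pos: "0 < m"
begin

abbreviation X :: "(nat \<times> ('b \<Rightarrow> nat)) rel" where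
  "X \<equiv> ord_mult_nat (omega_pow Bo) m"

lemma X_iff: "((i, f), (j, g)) \<in> X \<longleftrightarrow> i < m \<and> j < m \<and> f \<in> fin_supp Bo \<and> g \<in> fin_supp Bo \<and>
    (i < j \<or> i = j \<and> (f = g \<or> lex_less Bo f g))"
  unfolding ord_mult_nat_def Field_omega_pow by (auto simp: omega_pow_iff)

lemma Field_X: "Field X = {..<m} \<times> fin_supp Bo"
  by (simp add: Field_ord_mult_nat[OF refl_omega_pow] Field_omega_pow)

lemma mult_enc_m_in_fin_supp: "mult_enc (m, \<lambda>_. 0) \<in> fin_supp (top_ext Bo)"
  by (simp add: fin_supp_top_ext_iff zero_in_fin_supp)

sublocale interval_ranks "top_ext Bo" "Some b0" "mult_enc (m, \<lambda>_. 0)"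
proof
  have "Well_order (top_ext Bo)" using Bo by (rule Well_order_top_ext)
  then show "Linear_order (top_ext Bo)" "wf (top_ext Bo - Id)" by (simp_all add: order_on_defs)
  show "Some b0 \<in> Field (top_ext Bo)" using b0_in_Field by (simp add: Field_top_ext)
  show "(Some b0, y) \<in> top_ext Bo" if "y \<in> Field (top_ext Bo)" for y
    using that b0_in_Field b0_least by (cases y) (auto simp: Field_top_ext top_ext_iff)
qed (rule mult_enc_m_in_fin_supp)

lemma mem_seg_iff: "F \<in> seg \<longleftrightarrow> F None < m \<and> (\<lambda>x. F (Some x)) \<in> fin_supp Bo"
proof -
  have "lex_less (top_ext Bo) F (mult_enc (m, \<lambda>_. 0)) \<longleftrightarrow> F None < m"
    using lex_less_top_ext_iff[OF mult_enc_m_in_fin_supp, of F] by (simp add: not_lex_less_zero)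
  then show ?thesis unfolding seg_def by (auto simp: fin_supp_top_ext_iff)
qed

lemma mult_enc_image: "mult_enc ` Field X = seg"
proof
  show "mult_enc ` Field X \<subseteq> seg" unfolding Field_X by (auto simp: mem_seg_iff)
  show "seg \<subseteq> mult_enc ` Field X"
  proof
    fix F assume "F \<in> seg"
    then have "(F None, \<lambda>x. F (Some x)) \<in> Field X" by (simp add: mem_seg_iff Field_X)
    then show "F \<in> mult_enc ` Field X" using mult_enc_decompose by (metis image_eqI)
  qed
qed

lemma X_iff_mult_enc:
  assumes "p \<in> Field X" "q \<in> Field X"
  shows "(p, q) \<in> X \<longleftrightarrow> (mult_enc p, mult_enc q) \<in> omega_pow (top_ext Bo)"
proof -
  obtain i f j g where p: "p = (i, f)" and q: "q = (j, g)" by (cases p; cases q)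
  have "mult_enc q \<in> fin_supp (top_ext Bo)" "mult_enc p \<in> fin_supp (top_ext Bo)"
    using assms p q by (simp_all add: Field_X fin_supp_top_ext_iff)
  moreover have "lex_less (top_ext Bo) (mult_enc p) (mult_enc q) \<longleftrightarrow>
      i < j \<or> i = j \<and> lex_less Bo f g"
    using lex_less_top_ext_iff[OF calculation(1)] p q by simp
  moreover have "mult_enc p = mult_enc q \<longleftrightarrow> i = j \<and> f = g"
    using mult_enc_inj p q by (auto dest: injD)
  ultimately show ?thesis using assms p q by (auto simp: X_iff Field_X omega_pow_iff)
qed

lemma mult_enc_bij: "bij_betw mult_enc (Field X) seg"
  using inj_on_subset[OF mult_enc_inj subset_UNIV] mult_enc_image by (simp add: bij_betw_def)

sublocale seg_iso "top_ext Bo" "Some b0" "mult_enc (m, \<lambda>_. 0)" X mult_enc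
  by unfold_locales (fact mult_enc_bij, fact X_iff_mult_enc)

lemma rank_of_empty_eq: "rank_of {} = (None, floor_log m)"
proof -
  have "top_diff (top_ext Bo) (\<lambda>_. 0) (mult_enc (m, \<lambda>_. 0)) = None"
    using top_diff_eqI[OF zero_in_fin_supp T_in_fin_supp, of None] m_pos
    by (simp add: top_ext_iff split: option.splits)
  moreover have "(\<lambda>_. 0) \<noteq> mult_enc (m, \<lambda>_. 0)" using m_pos fun_cong[of _ _ None] by fastforce
  ultimately show ?thesis
    unfolding rank_of_empty gap_rank_def by (simp add: lower_def origin_bonus_def)
qed

end

theorem theorem6p12:
  fixes Bo :: "'b rel" and m :: nat
  assumes "Well_order Bo" and "countable (Field Bo)" and "Field Bo \<noteq> {}" and "m \<ge> 1"
  shows "\<forall>G :: 'c rel. Well_order G \<longrightarrow>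
           (rk_ge (ord_mult_nat (omega_pow Bo) m) {} G \<longleftrightarrow>
            (G, ord_plus_nat (omega_times Bo) (nat \<lfloor>log 2 (real m)\<rfloor>)) \<in> ordLeq)"
proof (intro allI impI)
  fix G :: "'c rel" assume G: "Well_order G"
  obtain b0 where "b0 \<in> Field Bo" "\<forall>y\<in>Field Bo. (b0, y) \<in> Bo"
    using Well_order_has_least[OF assms(1,3)] by blast
  then interpret omega_pow_mult Bo m b0 using assms(1,4) by unfold_locales auto
  have "rk_ge X {} G \<longleftrightarrow> G \<le>o init_seg (omega_times (top_ext Bo)) (None, floor_log m)"
    using rk_ge_iff[OF G] rank_of_empty_eq by simp
  also have "\<dots> \<longleftrightarrow> G \<le>o ord_plus_nat (omega_times Bo) (floor_log m)"
    using init_seg_omega_times_top_ext_ordIso[OF assms(1)]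
    by (meson ordIso_symmetric ordLeq_ordIso_trans)
  finally show "rk_ge X {} G \<longleftrightarrow> G \<le>o ord_plus_nat (omega_times Bo) (nat \<lfloor>log 2 (real m)\<rfloor>)"
    using floor_log_altdef[of m] assms(4) by simp
qed

end
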